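(* Let $t>0$ and let $\phi_n(z)=\phi_n(z;t)$ be the orthonormal polynomials on the unit circle for the weight $w(z)=\frac{1}{2\pi I_0(t)}\exp\big(\tfrac12 t(z+z^{-1})\big)$, with leading coefficients $\kappa_n=\kappa_n(t)>0$. Then $\frac{d}{dt}\phi_0=0$ and for $n\ge1$ $$2\frac{d}{dt}\phi_n(z)=\Big[\frac{I_1(t)}{I_0(t)}+\frac{\phi_{n+1}(0)}{\kappa_{n+1}}\frac{\kappa_n}{\phi_n(0)}\Big]\phi_n(z)-\frac{\kappa_{n-1}}{\kappa_n}\Big[1+\frac{\phi_{n+1}(0)}{\kappa_{n+1}}\frac{\kappa_n}{\phi_n(0)}z\Big]\phi_{n-1}(z).$$ Moreover, for $n\ge1$, $$\frac{2}{\kappa_n}\frac{d\kappa_n}{dt}=\frac{I_1(t)}{I_0(t)}+\frac{\phi_{n+1}(0)}{\kappa_{n+1}}\frac{\phi_n(0)}{\kappa_n},\qquad \frac{2}{\phi_n(0)}\frac{d\phi_n(0)}{dt}=\frac{I_1(t)}{I_0(t)}+\frac{\phi_{n+1}(0)}{\kappa_{n+1}}\frac{\kappa_n}{\phi_n(0)}-\frac{\phi_{n-1}(0)}{\phi_n(0)}\frac{\kappa_{n-1}}{\kappa_n}.$$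
   Context: $I_\nu$ is the modified Bessel function of the first kind. Orthonormality means $\int_{|\zeta|=1}\phi_m(\zeta)\overline{\phi_n(\zeta)}w(\zeta)\frac{d\zeta}{i\zeta}=\delta_{m,n}$ (counterclockwise contour), $\phi_n(z)=\kappa_nz^n+\cdots$ with $\kappa_n>0$. It is assumed that $\phi_n(0)\neq 0$ where it appears in a denominator. *)

theory Defs
  imports "HOL-Complex_Analysis.Complex_Analysis" "HOL-Computational_Algebra.Polynomial"
begin

definition bessel_I :: "nat \<Rightarrow> real \<Rightarrow> real" where
  "bessel_I nu t = (\<Sum>k. (t/2) ^ (2*k + nu) / (fact k * fact (k + nu)))"

definition opuc_weight :: "real \<Rightarrow> complex \<Rightarrow> complex" where
  "opuc_weight t z = exp (complex_of_real t * (z + inverse z) / 2) / complex_of_real (2 * pi * bessel_I 0 t)"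

definition opuc_inner :: "(complex \<Rightarrow> complex) \<Rightarrow> complex poly \<Rightarrow> complex poly \<Rightarrow> complex" where
  "opuc_inner w p q = contour_integral (circlepath 0 1)
      (\<lambda>\<zeta>. poly p \<zeta> * cnj (poly q \<zeta>) * w \<zeta> / (\<i> * \<zeta>))"

definition is_opuc_family :: "(complex \<Rightarrow> complex) \<Rightarrow> (nat \<Rightarrow> complex poly) \<Rightarrow> bool" where
  "is_opuc_family w phi \<longleftrightarrow>
     (\<forall>n. degree (phi n) = n \<and> lead_coeff (phi n) \<in> \<real> \<and> Re (lead_coeff (phi n)) > 0) \<and>
     (\<forall>m n. opuc_inner w (phi m) (phi n) = (if m = n then 1 else 0))"

end

(*
  The inner product of the weight is a Toeplitz form in the moments
  <z^j, z^k> = I_|j-k|(t) / I_0(t), obtained by integrating the exponential series of the weight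
  termwise. Since I_a' = (I_(a+1) + I_(a-1))/2, differentiating the moments in t gives
    d/dt <p, q> = <p', q> + <p, q'> + (<z p, q> + <p, z q>)/2 - (I_1/I_0) <p, q>.
  The phi_n are differentiable in t by the Gram-Schmidt formula, and differentiating the
  orthonormality relations yields every Fourier coefficient of phi_n', i.e.
    2 phi_n' = (I_1/I_0) phi_n - z phi_n + (kappa_n/kappa_(n+1)) phi_(n+1)
               - (kappa_(n-1)/kappa_n) phi_(n-1).
  Eliminating phi_(n+1) by the three-term recurrence of the phi_n gives the formula for phi_n';
  its top and constant coefficients give the other two formulas, the former with the help of
  kappa_n^2 - kappa_(n-1)^2 = phi_n(0)^2.
*)

theory Submission
  imports Defs
begin

section \<open>Modified Bessel functions\<close>

definition bessel_term :: "nat \<Rightarrow> real \<Rightarrow> nat \<Rightarrow> real" where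
  "bessel_term a x k = (x/2)^(2*k+a) / (fact k * fact (k+a))"

lemma bessel_I_conv_suminf: "bessel_I a = (\<lambda>x. \<Sum>k. bessel_term a x k)"
  by (simp add: fun_eq_iff bessel_I_def bessel_term_def)

lemma abs_bessel_term_le:
  assumes "\<bar>x\<bar> \<le> R"
  shows "\<bar>bessel_term a x k\<bar> \<le> bessel_term a R k"
proof -
  have "\<bar>x/2\<bar>^(2*k+a) \<le> (R/2)^(2*k+a)"
    using assms by (intro power_mono) auto
  then have "\<bar>x/2\<bar>^(2*k+a) / (fact k * fact (k+a)) \<le> (R/2)^(2*k+a) / (fact k * fact (k+a))"
    by (rule divide_right_mono) simp
  then show ?thesis
    by (simp add: bessel_term_def power_abs)
qed

lemma summable_bessel_term: "summable (bessel_term a x)"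
proof (rule summable_comparison_test')
  show "summable (\<lambda>k. \<bar>x/2\<bar>^a * (inverse (fact k) * ((x/2)^2)^k))"
    by (intro summable_mult summable_exp)
  fix k
  define A where "A = \<bar>x/2\<bar>^a * ((x/2)^2)^k / fact k"
  have sq: "(\<bar>x\<bar>/2)^2 = (x/2)^2"
    by (simp add: power2_eq_square)
  have "norm (bessel_term a x k) = A / fact (k+a)"
    unfolding A_def by (simp add: bessel_term_def power_add power_mult power_abs abs_mult sq)
  also have "\<dots> \<le> A / 1"
    by (rule frac_le) (simp_all add: A_def fact_ge_1)
  also have "\<dots> = \<bar>x/2\<bar>^a * (inverse (fact k) * ((x/2)^2)^k)"
    unfolding A_def div_by_1 divide_inverse by (simp only: mult_ac inverse_1 mult_1_left)
  finally show "norm (bessel_term a x k) \<le> \<bar>x/2\<bar>^a * (inverse (fact k) * ((x/2)^2)^k)" .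
qed

lemma bessel_term_sums: "bessel_term a x sums bessel_I a x"
  using summable_bessel_term by (simp add: bessel_I_conv_suminf summable_sums)

lemma bessel_I_0_ge_1: "bessel_I 0 x \<ge> 1"
proof -
  have "sum (bessel_term 0 x) {0} \<le> suminf (bessel_term 0 x)"
    by (rule sum_le_suminf[OF summable_bessel_term]) (auto simp: bessel_term_def power_mult)
  moreover have "sum (bessel_term 0 x) {0} = 1"
    by (simp add: bessel_term_def)
  ultimately show ?thesis
    by (simp add: bessel_I_conv_suminf)
qed

text \<open>Termwise differentiation splits the series of \<open>I\<^sub>a\<close> into a series for \<open>I\<^sub>a\<^sub>+\<^sub>1\<close> and one
  for \<open>I\<^sub>a\<^sub>-\<^sub>1\<close>; for \<open>a = 0\<close> the latter is again the series of \<open>I\<^sub>1 = I\<^sub>-\<^sub>1\<close>.\<close>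

definition bessel_term_succ :: "nat \<Rightarrow> real \<Rightarrow> nat \<Rightarrow> real" where
  "bessel_term_succ a x k = (if k = 0 then 0 else bessel_term (a+1) x (k-1))"

definition bessel_term_pred :: "nat \<Rightarrow> real \<Rightarrow> nat \<Rightarrow> real" where
  "bessel_term_pred a x k = (if a = 0 then bessel_term_succ a x k else bessel_term (a-1) x k)"

lemma bessel_term_succ_eq:
  "bessel_term_succ a x k = of_nat k * (x/2)^(2*k+a-1) / (fact k * fact (k+a))"
proof (cases k)
  case (Suc j)
  have "bessel_term_succ a x k = (x/2)^(2*j+(a+1)) / (fact j * fact (j+(a+1)))"
    using Suc by (simp add: bessel_term_succ_def bessel_term_def)
  also have "\<dots> = of_nat k * (x/2)^(2*j+(a+1)) / (of_nat k * (fact j * fact (j+(a+1))))"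
    using Suc by (simp only: mult_divide_mult_cancel_left_if of_nat_eq_0_iff) simp
  also have "of_nat k * (fact j * fact (j+(a+1))) = (fact k * fact (k+a) :: real)"
    using Suc by simp
  also have "2*j+(a+1) = 2*k+a-1"
    using Suc by simp
  finally show ?thesis .
qed (simp add: bessel_term_succ_def)

lemma bessel_term_pred_eq:
  "bessel_term_pred a x k = of_nat (k+a) * (x/2)^(2*k+a-1) / (fact k * fact (k+a))"
proof (cases a)
  case 0
  then show ?thesis
    by (simp add: bessel_term_pred_def bessel_term_succ_eq)
next
  case (Suc b)
  have "bessel_term_pred a x k = (x/2)^(2*k+b) / (fact k * fact (k+b))"
    using Suc by (simp add: bessel_term_pred_def bessel_term_def)
  also have "\<dots> = of_nat (k+a) * (x/2)^(2*k+b) / (of_nat (k+a) * (fact k * fact (k+b)))"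
    using Suc by (simp only: mult_divide_mult_cancel_left_if of_nat_eq_0_iff) simp
  also have "of_nat (k+a) * (fact k * fact (k+b)) = (fact k * fact (k+a) :: real)"
    using Suc by simp
  also have "2*k+b = 2*k+a-1"
    using Suc by simp
  finally show ?thesis .
qed

lemma bessel_term_has_derivative:
  "((\<lambda>x. bessel_term a x k) has_real_derivative
     (bessel_term_succ a x k + bessel_term_pred a x k) / 2) (at x)"
proof -
  have d: "((\<lambda>x. (x/2)^(2*k+a) / (fact k * fact (k+a))) has_real_derivative
      of_nat (2*k+a) * (x/2)^(2*k+a-1) * (1/2) / (fact k * fact (k+a))) (at x)"
    by (auto intro!: derivative_eq_intros)
  have "of_nat (2*k+a) * (x/2)^(2*k+a-1) * (1/2) / (fact k * fact (k+a))
      = (bessel_term_succ a x k + bessel_term_pred a x k) / 2"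
    by (simp add: bessel_term_succ_eq bessel_term_pred_eq field_simps)
  with d show ?thesis
    by (simp only: bessel_term_def)
qed

lemma bessel_term_succ_sums: "bessel_term_succ a x sums bessel_I (a+1) x"
proof -
  have "(\<lambda>k. bessel_term_succ a x (Suc k)) sums bessel_I (a+1) x"
    by (simp add: bessel_term_succ_def bessel_term_sums)
  then show ?thesis
    by (subst (asm) sums_Suc_iff) (simp add: bessel_term_succ_def)
qed

lemma bessel_term_pred_sums: "bessel_term_pred a x sums bessel_I (nat \<bar>int a - 1\<bar>) x"
proof (cases "a = 0")
  case True
  then have "bessel_term_pred a x = bessel_term_succ 0 x"
    by (simp add: bessel_term_pred_def fun_eq_iff)
  then show ?thesis
    using True bessel_term_succ_sums[of 0 x] by simp
next
  case False
  then have "bessel_term_pred a x = bessel_term (a-1) x"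
    by (simp add: bessel_term_pred_def fun_eq_iff)
  moreover have "nat \<bar>int a - 1\<bar> = a - 1"
    using False by simp
  ultimately show ?thesis
    using bessel_term_sums[of "a-1" x] by (simp only:)
qed

lemma abs_bessel_term_succ_le:
  "\<bar>x\<bar> \<le> R \<Longrightarrow> \<bar>bessel_term_succ a x k\<bar> \<le> bessel_term_succ a R k"
  by (simp add: bessel_term_succ_def abs_bessel_term_le)

lemma abs_bessel_term_pred_le:
  "\<bar>x\<bar> \<le> R \<Longrightarrow> \<bar>bessel_term_pred a x k\<bar> \<le> bessel_term_pred a R k"
  by (simp add: bessel_term_pred_def abs_bessel_term_succ_le abs_bessel_term_le)

lemma bessel_I_has_derivative:
  "(bessel_I a has_real_derivative (bessel_I (a+1) x + bessel_I (nat \<bar>int a - 1\<bar>) x) / 2) (at x)"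
proof -
  define S where "S = ball (0::real) (\<bar>x\<bar> + 1)"
  let ?d = "\<lambda>k y. (bessel_term_succ a y k + bessel_term_pred a y k) / 2"
  have d_sums: "(\<lambda>k. ?d k y) sums ((bessel_I (a+1) y + bessel_I (nat \<bar>int a - 1\<bar>) y) / 2)" for y
    by (intro sums_divide sums_add bessel_term_succ_sums bessel_term_pred_sums)
  have uniform: "uniformly_convergent_on S (\<lambda>n y. \<Sum>k<n. ?d k y)"
  proof (rule Weierstrass_m_test')
    show "summable (\<lambda>k. ?d k (\<bar>x\<bar> + 1))"
      using d_sums by (rule sums_summable)
    fix k y
    assume "y \<in> S"
    then have y: "\<bar>y\<bar> \<le> \<bar>x\<bar> + 1"
      by (simp add: S_def)
    show "norm (?d k y) \<le> ?d k (\<bar>x\<bar> + 1)"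
      using abs_bessel_term_succ_le[OF y, of a k] abs_bessel_term_pred_le[OF y, of a k]
        abs_triangle_ineq[of "bessel_term_succ a y k" "bessel_term_pred a y k"] by simp
  qed
  have deriv: "(bessel_I a has_field_derivative (\<Sum>k. ?d k x)) (at x)"
    unfolding bessel_I_conv_suminf
  proof (rule has_field_derivative_series'(2)[OF _ _ uniform])
    show "((\<lambda>y. bessel_term a y k) has_field_derivative ?d k y) (at y within S)" for k y
      by (rule has_field_derivative_at_within, rule bessel_term_has_derivative)
    show "0 \<in> S" "x \<in> interior S" "convex S"
      by (simp_all add: S_def)
  qed (rule summable_bessel_term)
  have "(\<Sum>k. ?d k x) = (bessel_I (a+1) x + bessel_I (nat \<bar>int a - 1\<bar>) x) / 2"
    using d_sums[of x] by (rule sums_unique[symmetric])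
  then show ?thesis
    using deriv by (rule subst)
qed

section \<open>Moments of the weight\<close>

lemma contour_integral_circlepath_powi:
  "contour_integral (circlepath 0 1) (\<lambda>z. z powi m) = (if m = -1 then 2 * of_real pi * \<i> else 0)"
proof (cases "m = -1")
  case True
  have "contour_integral (circlepath 0 1) (\<lambda>z::complex. z powi m)
      = contour_integral (circlepath 0 1) (\<lambda>z. 1 / (z - 0))"
    by (rule contour_integral_eq) (auto simp: True power_int_minus divide_inverse)
  also have "\<dots> = 2 * of_real pi * \<i>"
    by (rule contour_integral_circlepath) simp
  finally show ?thesis
    using True by simp
next
  case False
  have "((\<lambda>z::complex. z powi (m+1) / of_int (m+1)) has_field_derivative z powi m)
      (at z within -{0})" if "z \<in> -{0}" for z
  proof -
    have "(of_int m + 1 :: complex) \<noteq> 0"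
      using False by (metis add_eq_0_iff2 of_int_1 of_int_add of_int_eq_0_iff)
    then show ?thesis
      using that by (auto intro!: derivative_eq_intros)
  qed
  then have "((\<lambda>z. z powi m) has_contour_integral
      ((\<lambda>z. z powi (m+1) / of_int (m+1)) (pathfinish (circlepath 0 1))
        - (\<lambda>z. z powi (m+1) / of_int (m+1)) (pathstart (circlepath 0 1)))) (circlepath 0 1)"
    by (rule contour_integral_primitive) auto
  then show ?thesis
    using False by (simp add: contour_integral_unique)
qed

lemma contour_integral_circlepath_sum_powi:
  assumes "finite A"
  shows "contour_integral (circlepath 0 1) (\<lambda>z. \<Sum>l\<in>A. c l * z powi (e l))
       = 2 * of_real pi * \<i> * (\<Sum>l\<in>A. if e l = -1 then c l else 0)"
proof -
  have integrable: "(\<lambda>z. z powi (e l)) contour_integrable_on (circlepath 0 1)" for l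
    by (rule contour_integrable_continuous_circlepath) (auto intro!: continuous_intros)
  have "contour_integral (circlepath 0 1) (\<lambda>z. \<Sum>l\<in>A. c l * z powi (e l))
      = (\<Sum>l\<in>A. c l * contour_integral (circlepath 0 1) (\<lambda>z. z powi (e l)))"
    using assms integrable
    by (simp add: contour_integral_sum contour_integral_lmul contour_integrable_lmul)
  then show ?thesis
    by (simp add: contour_integral_circlepath_powi sum_distrib_left if_distrib mult.commute
        cong: if_cong)
qed

lemma norm_exp_laurent_term_le:
  fixes z :: complex
  assumes "norm z = 1"
  shows "norm (((of_real s * (z + inverse z) / 2)^n /\<^sub>R fact n) * z powi (d - 1)) \<le> \<bar>s\<bar>^n / fact n"
proof -
  have "norm (z + inverse z) \<le> 2"
    using norm_triangle_ineq[of z "inverse z"] assms by (simp add: norm_inverse)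
  then have bound: "norm (of_real s * (z + inverse z) / 2) \<le> \<bar>s\<bar>"
    using mult_left_mono[of "norm (z + inverse z)" 2 "\<bar>s\<bar>"] by (simp add: norm_mult norm_divide)
  have "norm (((of_real s * (z + inverse z) / 2)^n /\<^sub>R fact n) * z powi (d - 1))
      = inverse (fact n) * norm (of_real s * (z + inverse z) / 2) ^ n"
    using assms by (simp add: norm_mult norm_power norm_power_int)
  also have "\<dots> \<le> inverse (fact n) * \<bar>s\<bar>^n"
    using bound by (simp add: mult_left_mono power_mono)
  also have "\<dots> = \<bar>s\<bar>^n / fact n"
    by (simp add: divide_inverse mult.commute)
  finally show ?thesis .
qed

text \<open>Integrating the exponential series of the weight termwise: the series converges
  uniformly on the unit circle since \<open>\<bar>z + 1/z\<bar> \<le> 2\<close> there.\<close>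

lemma exp_laurent_integrals_sums:
  fixes s :: real and d :: int
  defines "f \<equiv> \<lambda>n z. ((of_real s * (z + inverse z) / 2)^n /\<^sub>R fact n) * z powi (d - 1)"
  shows "(\<lambda>n. contour_integral (circlepath 0 1) (f n)) sums
    contour_integral (circlepath 0 1) (\<lambda>z. exp (of_real s * (z + inverse z) / 2) * z powi (d - 1))"
proof -
  let ?F = "\<lambda>z. exp (of_real s * (z + inverse z) / 2) * z powi (d - 1)"
  have bound: "norm (f n z) \<le> \<bar>s\<bar>^n / fact n" if "z \<in> sphere 0 1" for n z
    unfolding f_def using that by (intro norm_exp_laurent_term_le) simp
  have "summable (\<lambda>n. \<bar>s\<bar>^n / fact n)"
    using summable_exp[of "\<bar>s\<bar>"] by (simp add: divide_inverse mult.commute)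
  then have "uniform_limit (sphere 0 1) (\<lambda>n z. \<Sum>i<n. f i z) (\<lambda>z. \<Sum>i. f i z) sequentially"
    by (rule Weierstrass_m_test[rotated]) (use bound in auto)
  moreover have "(\<Sum>i. f i z) = ?F z" for z
    unfolding f_def by (rule sums_unique[symmetric], rule sums_mult2, rule exp_converges)
  ultimately have uniform: "uniform_limit (sphere 0 1) (\<lambda>n z. \<Sum>i<n. f i z) ?F sequentially"
    by simp
  have integrable: "f i contour_integrable_on circlepath 0 1" for i
    unfolding f_def
    by (rule contour_integrable_continuous_circlepath) (auto intro!: continuous_intros)
  have "((\<lambda>n. contour_integral (circlepath 0 1) (\<lambda>z. \<Sum>i<n. f i z))
      \<longlongrightarrow> contour_integral (circlepath 0 1) ?F) sequentially"
    by (rule contour_integral_uniform_limit_circlepath(2)[OF _ uniform])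
      (auto intro: contour_integrable_sum integrable always_eventually)
  moreover have "contour_integral (circlepath 0 1) (\<lambda>z. \<Sum>i<n. f i z)
      = (\<Sum>i<n. contour_integral (circlepath 0 1) (f i))" for n
    by (rule contour_integral_sum) (auto intro: integrable)
  ultimately show ?thesis
    by (simp add: sums_def)
qed

text \<open>The coefficient of \<open>z\<^sup>-\<^sup>d\<close> in the Laurent polynomial \<open>(s(z + 1/z)/2)\<^sup>n / n!\<close>.\<close>

definition exp_laurent_coeff :: "real \<Rightarrow> int \<Rightarrow> nat \<Rightarrow> complex" where
  "exp_laurent_coeff s d n =
     (\<Sum>l\<le>n. if int l - int (n - l) + d = 0 then of_real ((s/2)^n / fact n) * of_nat (n choose l) else 0)"

lemma contour_integral_exp_laurent_term:
  "contour_integral (circlepath 0 1) (\<lambda>z. ((of_real s * (z + inverse z) / 2)^n /\<^sub>R fact n) * z powi (d - 1))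
   = 2 * of_real pi * \<i> * exp_laurent_coeff s d n"
proof -
  let ?c = "\<lambda>l. of_real ((s/2)^n / fact n) * of_nat (n choose l) :: complex"
  have expand: "((of_real s * (z + inverse z) / 2)^n /\<^sub>R fact n) * z powi (d - 1)
      = (\<Sum>l\<le>n. ?c l * z powi (int l - int (n - l) + (d - 1)))" if "z \<noteq> 0" for z
  proof -
    have "(of_real s * (z + inverse z) / 2)^n = of_real ((s/2)^n) * (z + inverse z)^n"
      by (simp add: power_mult_distrib power_divide)
    also have "(z + inverse z)^n = (\<Sum>l\<le>n. of_nat (n choose l) * z^l * inverse z^(n-l))"
      by (rule binomial_ring)
    finally have power: "(of_real s * (z + inverse z) / 2)^n
        = of_real ((s/2)^n) * (\<Sum>l\<le>n. of_nat (n choose l) * z^l * inverse z^(n-l))" .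
    have "((of_real s * (z + inverse z) / 2)^n /\<^sub>R fact n) * z powi (d - 1)
        = (\<Sum>l\<le>n. ?c l * (z^l * inverse z^(n-l) * z powi (d - 1)))"
      unfolding power scaleR_conv_of_real sum_distrib_left sum_distrib_right
      by (intro sum.cong refl) (simp only: divide_inverse of_real_mult mult_ac)
    moreover have "z^l * inverse z^m * z powi e = z powi (int l - int m + e)" for l m e
      using that by (simp add: power_int_add power_int_diff power_int_minus field_simps)
    ultimately show ?thesis
      by (simp only:)
  qed
  have "contour_integral (circlepath 0 1) (\<lambda>z. ((of_real s * (z + inverse z) / 2)^n /\<^sub>R fact n) * z powi (d - 1))
      = contour_integral (circlepath 0 1) (\<lambda>z. \<Sum>l\<le>n. ?c l * z powi (int l - int (n - l) + (d - 1)))"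
    by (rule contour_integral_eq, rule expand) auto
  also have "\<dots> = 2 * of_real pi * \<i> * (\<Sum>l\<le>n. if int l - int (n - l) + (d - 1) = -1 then ?c l else 0)"
    by (rule contour_integral_circlepath_sum_powi) simp
  also have "\<dots> = 2 * of_real pi * \<i> * exp_laurent_coeff s d n"
    unfolding exp_laurent_coeff_def by (intro arg_cong2[where f="(*)"] sum.cong) auto
  finally show ?thesis .
qed

lemma exp_laurent_coeff_eq_0:
  assumes "n \<notin> range (\<lambda>k. nat \<bar>d\<bar> + 2 * k)"
  shows "exp_laurent_coeff s d n = 0"
proof -
  have "int l - int (n - l) + d \<noteq> 0" if "l \<le> n" for l
  proof
    assume "int l - int (n - l) + d = 0"
    then have "n = nat \<bar>d\<bar> + 2 * (if d \<ge> 0 then l else l - nat \<bar>d\<bar>)"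
      using that by auto
    then show False
      using assms by blast
  qed
  then show ?thesis
    by (simp add: exp_laurent_coeff_def)
qed

lemma exp_laurent_coeff_bessel:
  "exp_laurent_coeff s d (nat \<bar>d\<bar> + 2 * k) = of_real (bessel_term (nat \<bar>d\<bar>) s k)"
proof -
  define a where "a = nat \<bar>d\<bar>"
  define l0 where "l0 = (if d \<ge> 0 then k else a + k)"
  have "int l - int (a + 2 * k - l) + d = 0 \<longleftrightarrow> l = l0" if "l \<le> a + 2 * k" for l
    using that by (auto simp: l0_def a_def)
  then have "exp_laurent_coeff s d (a + 2 * k)
      = of_real ((s/2)^(a + 2*k) / fact (a + 2*k)) * of_nat (a + 2*k choose l0)"
    by (simp add: exp_laurent_coeff_def a_def l0_def cong: if_cong)
  also have "a + 2 * k choose l0 = a + 2 * k choose k"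
    using binomial_symmetric[of k "a + 2 * k"] by (auto simp: l0_def add.commute)
  also have "(of_nat (a + 2 * k choose k) :: complex) = of_real (fact (a + 2 * k) / (fact k * fact (k + a)))"
    by (metis binomial_fact add_diff_cancel_left' le_add2 mult_2 of_real_of_nat_eq add.commute
        add.left_commute)
  also have "of_real ((s/2)^(a + 2*k) / fact (a + 2*k)) * \<dots> = of_real (bessel_term a s k)"
    unfolding of_real_mult[symmetric] by (simp add: bessel_term_def add.commute)
  finally show ?thesis
    by (simp add: a_def)
qed

lemma contour_integral_exp_weight:
  "contour_integral (circlepath 0 1) (\<lambda>z. exp (of_real s * (z + inverse z) / 2) * z powi (d - 1))
   = 2 * of_real pi * \<i> * of_real (bessel_I (nat \<bar>d\<bar>) s)"
proof -
  let ?c = "\<lambda>n. 2 * of_real pi * \<i> * exp_laurent_coeff s d n"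
  have "?c sums contour_integral (circlepath 0 1)
      (\<lambda>z. exp (of_real s * (z + inverse z) / 2) * z powi (d - 1))"
    using exp_laurent_integrals_sums[of s d] by (simp only: contour_integral_exp_laurent_term)
  moreover have "?c sums (2 * of_real pi * \<i> * of_real (bessel_I (nat \<bar>d\<bar>) s))"
  proof -
    have "(\<lambda>k. ?c (nat \<bar>d\<bar> + 2 * k)) sums (2 * of_real pi * \<i> * of_real (bessel_I (nat \<bar>d\<bar>) s))"
      unfolding exp_laurent_coeff_bessel by (intro sums_mult sums_of_real bessel_term_sums)
    moreover have "strict_mono (\<lambda>k. nat \<bar>d\<bar> + 2 * k)"
      by (rule strict_monoI) simp
    ultimately show ?thesis
      using sums_mono_reindex[of "\<lambda>k. nat \<bar>d\<bar> + 2 * k" ?c] exp_laurent_coeff_eq_0 by simp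
  qed
  ultimately show ?thesis
    by (rule sums_unique2)
qed

lemma cnj_eq_inverse_if_norm_1:
  assumes "norm (z::complex) = 1"
  shows "cnj z = inverse z"
proof -
  have "z * cnj z = 1"
    using complex_norm_square[of z] assms by simp
  moreover have "z \<noteq> 0"
    using assms by auto
  ultimately show ?thesis
    by (simp add: field_simps)
qed

definition opuc_moment :: "real \<Rightarrow> int \<Rightarrow> complex" where
  "opuc_moment s d = of_real (bessel_I (nat \<bar>d\<bar>) s / bessel_I 0 s)"

lemma opuc_moment_0 [simp]: "opuc_moment s 0 = 1"
  using bessel_I_0_ge_1[of s] by (simp add: opuc_moment_def)

lemma opuc_moment_1: "opuc_moment s 1 = of_real (bessel_I 1 s / bessel_I 0 s)"
  by (simp add: opuc_moment_def)

lemma opuc_moment_uminus: "opuc_moment s (- d) = opuc_moment s d"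
  by (simp add: opuc_moment_def)

lemma cnj_opuc_moment [simp]: "cnj (opuc_moment s d) = opuc_moment s d"
  by (simp add: opuc_moment_def)

lemma opuc_inner_monom_monom:
  "opuc_inner (opuc_weight s) (monom 1 j) (monom 1 k) = opuc_moment s (int j - int k)"
proof -
  define C where "C = inverse (\<i> * of_real (2 * pi * bessel_I 0 s))"
  let ?F = "\<lambda>z. exp (of_real s * (z + inverse z) / 2) * z powi ((int j - int k) - 1)"
  have "opuc_inner (opuc_weight s) (monom 1 j) (monom 1 k)
      = contour_integral (circlepath 0 1) (\<lambda>z. ?F z * C)"
    unfolding opuc_inner_def
  proof (rule contour_integral_eq)
    fix z
    assume "z \<in> path_image (circlepath 0 1)"
    then have z: "norm z = 1" "z \<noteq> 0"
      by auto
    have "z^j * inverse z^k * z powi (-1) = z powi (int j - int k + (-1))"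
      using z by (simp add: power_int_add power_int_diff power_int_minus field_simps)
    then have powi: "z powi ((int j - int k) - 1) = z^j / (z^k * z)"
      using z by (simp add: power_int_minus power_inverse divide_inverse mult_ac)
    show "poly (monom 1 j) z * cnj (poly (monom 1 k) z) * opuc_weight s z / (\<i> * z) = ?F z * C"
      unfolding powi opuc_weight_def C_def poly_monom
      using z by (simp add: cnj_eq_inverse_if_norm_1 field_simps)
  qed
  also have "\<dots> = contour_integral (circlepath 0 1) ?F * C"
    by (rule contour_integral_rmul, rule contour_integrable_continuous_circlepath)
      (auto intro!: continuous_intros)
  also have "\<dots> = 2 * of_real pi * \<i> * of_real (bessel_I (nat \<bar>int j - int k\<bar>) s) * C"
    by (simp only: contour_integral_exp_weight)
  also have "\<dots> = opuc_moment s (int j - int k)"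
    using bessel_I_0_ge_1[of s] by (simp add: C_def opuc_moment_def field_simps)
  finally show ?thesis .
qed

lemma bessel_I_succ_plus_pred:
  "bessel_I (nat \<bar>d + 1\<bar>) x + bessel_I (nat \<bar>d - 1\<bar>) x
   = bessel_I (nat \<bar>d\<bar> + 1) x + bessel_I (nat \<bar>int (nat \<bar>d\<bar>) - 1\<bar>) x"
proof (cases "d \<ge> 0")
  case True
  then have "nat \<bar>d + 1\<bar> = nat \<bar>d\<bar> + 1" "int (nat \<bar>d\<bar>) = d"
    by auto
  then show ?thesis
    by simp
next
  case False
  then have "nat \<bar>d - 1\<bar> = nat \<bar>d\<bar> + 1" "\<bar>d + 1\<bar> = \<bar>int (nat \<bar>d\<bar>) - 1\<bar>"
    by auto
  then show ?thesis
    by simp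
qed

lemma opuc_moment_has_derivative:
  "((\<lambda>s. opuc_moment s d) has_vector_derivative
     (opuc_moment x (d+1) + opuc_moment x (d-1)) / 2 - opuc_moment x 1 * opuc_moment x d) (at x)"
proof -
  let ?I = "\<lambda>a. bessel_I a x" and ?a = "nat \<bar>d\<bar>"
  define g' where "g' = (?I (nat \<bar>d + 1\<bar>) / ?I 0 + ?I (nat \<bar>d - 1\<bar>) / ?I 0) / 2
    - ?I 1 / ?I 0 * (?I ?a / ?I 0)"
  have I0: "?I 0 \<noteq> 0"
    using bessel_I_0_ge_1[of x] by simp
  have "((\<lambda>s. bessel_I ?a s / bessel_I 0 s) has_real_derivative
      ((?I (?a + 1) + ?I (nat \<bar>int ?a - 1\<bar>)) / 2 * ?I 0
        - ?I ?a * ((?I (0 + 1) + ?I (nat \<bar>int 0 - 1\<bar>)) / 2)) / (?I 0 * ?I 0)) (at x)"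
    by (rule DERIV_divide[OF bessel_I_has_derivative bessel_I_has_derivative I0])
  then have "((\<lambda>s. bessel_I ?a s / bessel_I 0 s) has_real_derivative
      ((?I (nat \<bar>d + 1\<bar>) + ?I (nat \<bar>d - 1\<bar>)) / 2 * ?I 0 - ?I ?a * ?I 1) / (?I 0 * ?I 0)) (at x)"
    by (simp only: bessel_I_succ_plus_pred) simp
  then have "((\<lambda>s. bessel_I ?a s / bessel_I 0 s) has_real_derivative g') (at x)"
    unfolding g'_def by (rule DERIV_cong) (use I0 in \<open>simp add: field_simps\<close>)
  then have "((\<lambda>s. complex_of_real (bessel_I ?a s / bessel_I 0 s)) has_vector_derivative
      complex_of_real g') (at x)"
    by (rule has_vector_derivative_of_real)
  then show ?thesis
    by (simp add: opuc_moment_def g'_def)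
qed

section \<open>The inner product as a Toeplitz form\<close>

definition toeplitz_inner :: "real \<Rightarrow> complex poly \<Rightarrow> complex poly \<Rightarrow> complex" where
  "toeplitz_inner s p q =
     (\<Sum>j\<le>degree p. \<Sum>k\<le>degree q. coeff p j * cnj (coeff q k) * opuc_moment s (int j - int k))"

lemma opuc_inner_eq_toeplitz_inner: "opuc_inner (opuc_weight s) p q = toeplitz_inner s p q"
proof -
  let ?M = "\<lambda>j k \<zeta>. poly (monom 1 j) \<zeta> * cnj (poly (monom 1 k) \<zeta>) * opuc_weight s \<zeta> / (\<i> * \<zeta>)"
  have "(?M j k has_contour_integral opuc_moment s (int j - int k)) (circlepath 0 1)" for j k
  proof -
    have "?M j k contour_integrable_on circlepath 0 1"
      unfolding opuc_weight_def poly_monom using bessel_I_0_ge_1[of s]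
      by (intro contour_integrable_continuous_circlepath) (auto intro!: continuous_intros)
    then show ?thesis
      using has_contour_integral_integral opuc_inner_monom_monom[of s j k]
      unfolding opuc_inner_def by metis
  qed
  then have "((\<lambda>\<zeta>. \<Sum>j\<le>degree p. \<Sum>k\<le>degree q. (coeff p j * cnj (coeff q k)) * ?M j k \<zeta>)
      has_contour_integral toeplitz_inner s p q) (circlepath 0 1)"
    unfolding toeplitz_inner_def by (intro has_contour_integral_sum has_contour_integral_lmul) auto
  then have "((\<lambda>\<zeta>. poly p \<zeta> * cnj (poly q \<zeta>) * opuc_weight s \<zeta> / (\<i> * \<zeta>))
      has_contour_integral toeplitz_inner s p q) (circlepath 0 1)"
  proof (rule has_contour_integral_eq)
    show "(\<Sum>j\<le>degree p. \<Sum>k\<le>degree q. (coeff p j * cnj (coeff q k)) * ?M j k \<zeta>)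
        = poly p \<zeta> * cnj (poly q \<zeta>) * opuc_weight s \<zeta> / (\<i> * \<zeta>)" for \<zeta>
      unfolding poly_altdef[of p] poly_altdef[of q] poly_monom
      by (simp add: sum_distrib_left sum_distrib_right sum_divide_distrib cnj_sum mult_ac, rule sum.swap)
  qed
  then show ?thesis
    unfolding opuc_inner_def by (rule contour_integral_unique)
qed

lemma toeplitz_inner_degree_le:
  assumes "degree p \<le> N" "degree q \<le> M"
  shows "toeplitz_inner s p q
    = (\<Sum>j\<le>N. \<Sum>k\<le>M. coeff p j * cnj (coeff q k) * opuc_moment s (int j - int k))"
proof -
  have "(\<Sum>k\<le>degree q. coeff p j * cnj (coeff q k) * opuc_moment s (int j - int k))
      = (\<Sum>k\<le>M. coeff p j * cnj (coeff q k) * opuc_moment s (int j - int k))" for j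
    by (rule sum.mono_neutral_left) (use assms in \<open>auto simp: coeff_eq_0\<close>)
  then have "toeplitz_inner s p q
      = (\<Sum>j\<le>degree p. \<Sum>k\<le>M. coeff p j * cnj (coeff q k) * opuc_moment s (int j - int k))"
    by (simp add: toeplitz_inner_def)
  also have "\<dots> = (\<Sum>j\<le>N. \<Sum>k\<le>M. coeff p j * cnj (coeff q k) * opuc_moment s (int j - int k))"
    by (rule sum.mono_neutral_left) (use assms in \<open>auto simp: coeff_eq_0\<close>)
  finally show ?thesis .
qed

lemma toeplitz_inner_add_left: "toeplitz_inner s (p + q) r = toeplitz_inner s p r + toeplitz_inner s q r"
proof -
  define N where "N = max (degree p) (degree q)"
  have "degree p \<le> N" "degree q \<le> N" "degree (p + q) \<le> N"
    unfolding N_def by (auto intro: degree_add_le)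
  then show ?thesis
    by (simp add: toeplitz_inner_degree_le[of _ N _ "degree r"] distrib_right sum.distrib)
qed

lemma toeplitz_inner_smult_left: "toeplitz_inner s (smult c p) q = c * toeplitz_inner s p q"
  unfolding toeplitz_inner_degree_le[OF degree_smult_le order.refl] toeplitz_inner_def
  by (simp add: sum_distrib_left mult_ac)

lemma toeplitz_inner_zero_left [simp]: "toeplitz_inner s 0 q = 0"
  using toeplitz_inner_smult_left[of s 0 0 q] by simp

lemma toeplitz_inner_commute: "toeplitz_inner s q p = cnj (toeplitz_inner s p q)"
  unfolding toeplitz_inner_def cnj_sum
  by (subst sum.swap) (simp add: mult_ac opuc_moment_uminus[of s "int _ - int _", simplified, symmetric])

lemma toeplitz_inner_add_right: "toeplitz_inner s r (p + q) = toeplitz_inner s r p + toeplitz_inner s r q"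
  by (metis toeplitz_inner_commute toeplitz_inner_add_left complex_cnj_add)

lemma toeplitz_inner_smult_right: "toeplitz_inner s p (smult c q) = cnj c * toeplitz_inner s p q"
  by (metis toeplitz_inner_commute toeplitz_inner_smult_left complex_cnj_mult)

lemma toeplitz_inner_diff_left: "toeplitz_inner s (p - q) r = toeplitz_inner s p r - toeplitz_inner s q r"
  using toeplitz_inner_add_left[of s p "-q" r] toeplitz_inner_smult_left[of s "-1" q r] by simp

lemma toeplitz_inner_diff_right: "toeplitz_inner s r (p - q) = toeplitz_inner s r p - toeplitz_inner s r q"
  using toeplitz_inner_add_right[of s r p "-q"] toeplitz_inner_smult_right[of s r "-1" q] by simp

lemmas toeplitz_inner_linear_left =
  toeplitz_inner_add_left toeplitz_inner_diff_left toeplitz_inner_smult_left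

lemma toeplitz_inner_sum_left: "toeplitz_inner s (\<Sum>i\<in>A. f i) q = (\<Sum>i\<in>A. toeplitz_inner s (f i) q)"
  by (induction A rule: infinite_finite_induct) (simp_all add: toeplitz_inner_add_left)

lemma toeplitz_inner_pCons_0: "toeplitz_inner s (pCons 0 p) (pCons 0 q) = toeplitz_inner s p q"
  unfolding toeplitz_inner_degree_le[OF degree_pCons_le degree_pCons_le] toeplitz_inner_def
  by (simp add: sum.atMost_Suc_shift del: sum.atMost_Suc)

lemma toeplitz_inner_map_poly_cnj:
  "toeplitz_inner s (map_poly cnj p) (map_poly cnj q) = cnj (toeplitz_inner s p q)"
  unfolding toeplitz_inner_def by (simp add: coeff_map_poly cnj_sum degree_map_poly)

lemma toeplitz_inner_const: "toeplitz_inner s [:a:] [:b:] = a * cnj b"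
  by (simp add: toeplitz_inner_def)

lemma cnj_toeplitz_inner_real_poly:
  "map_poly cnj p = p \<Longrightarrow> map_poly cnj q = q \<Longrightarrow> cnj (toeplitz_inner s p q) = toeplitz_inner s p q"
  using toeplitz_inner_map_poly_cnj[of s p q] by simp

lemma toeplitz_inner_monom_left:
  assumes "degree q \<le> N"
  shows "toeplitz_inner s (monom 1 k) q = (\<Sum>i\<le>N. cnj (coeff q i) * opuc_moment s (int k - int i))"
  unfolding toeplitz_inner_degree_le[OF degree_monom_le assms]
  by (subst sum.swap) (simp add: coeff_monom if_distrib if_distribR sum.delta' cong: if_cong)

lemma toeplitz_inner_monom_right:
  assumes "degree p \<le> N"
  shows "toeplitz_inner s p (monom 1 k) = (\<Sum>j\<le>N. coeff p j * opuc_moment s (int j - int k))"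
  by (subst toeplitz_inner_commute)
    (simp add: toeplitz_inner_monom_left[OF assms] cnj_sum opuc_moment_uminus[of s "int _ - int _", simplified, symmetric])

section \<open>Orthonormal polynomials\<close>

lemma degree_le_if_coeff_Suc_eq_0:
  assumes "degree q \<le> Suc n" "coeff q (Suc n) = 0"
  shows "degree q \<le> n"
proof (rule degree_le, intro allI impI)
  fix i
  assume "n < i"
  then show "coeff q i = 0"
    using assms by (cases "i = Suc n") (auto intro: coeff_eq_0)
qed

locale orthonormal_family =
  fixes s :: real and \<phi> :: "nat \<Rightarrow> complex poly"
  assumes degree_phi: "degree (\<phi> n) = n"
    and lead_coeff_phi_real: "lead_coeff (\<phi> n) \<in> \<real>"
    and lead_coeff_phi_pos: "Re (lead_coeff (\<phi> n)) > 0"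
    and orthonormal: "toeplitz_inner s (\<phi> m) (\<phi> n) = (if m = n then 1 else 0)"
begin

definition \<kappa> :: "nat \<Rightarrow> complex" where
  "\<kappa> n = lead_coeff (\<phi> n)"

lemma coeff_phi_self: "coeff (\<phi> n) n = \<kappa> n"
  using degree_phi[of n] by (simp add: \<kappa>_def)

lemma kappa_real_pos: "\<exists>k. \<kappa> n = of_real k \<and> k > 0"
proof -
  obtain k where "\<kappa> n = of_real k"
    using lead_coeff_phi_real[of n] unfolding \<kappa>_def by (auto elim!: Reals_cases)
  moreover have "k > 0"
    using lead_coeff_phi_pos[of n] calculation unfolding \<kappa>_def by simp
  ultimately show ?thesis
    by blast
qed

lemma kappa_nonzero: "\<kappa> n \<noteq> 0"
  using lead_coeff_phi_pos[of n] by (auto simp: \<kappa>_def)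

lemma cnj_kappa: "cnj (\<kappa> n) = \<kappa> n"
  using lead_coeff_phi_real[of n] by (simp add: \<kappa>_def Reals_cnj_iff)

lemma phi_0: "\<phi> 0 = 1"
proof -
  obtain k where k: "\<kappa> 0 = of_real k" "k > 0"
    using kappa_real_pos by blast
  have phi: "\<phi> 0 = [:\<kappa> 0:]"
    using degree_phi[of 0] coeff_phi_self[of 0] by (metis degree_0_id)
  then have "k^2 = 1"
    using orthonormal[of 0 0] k by (simp add: toeplitz_inner_const power2_eq_square flip: of_real_mult)
  then have "k = 1"
    using k(2) by (auto simp: power2_eq_1_iff)
  then show ?thesis
    using phi k by (simp add: one_pCons)
qed

lemma fourier_expansion:
  "degree p \<le> n \<Longrightarrow> p = (\<Sum>m\<le>n. smult (toeplitz_inner s p (\<phi> m)) (\<phi> m))"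
proof (induction n arbitrary: p)
  case 0
  then obtain c where "p = [:c:]"
    by (metis degree_0_id le_zero_eq)
  then show ?case
    using toeplitz_inner_const[of s c 1] by (simp add: phi_0 pCons_one)
next
  case (Suc n)
  define a where "a = coeff p (Suc n) / \<kappa> (Suc n)"
  define p' where "p' = p - smult a (\<phi> (Suc n))"
  have "degree p' \<le> Suc n"
    using Suc.prems degree_diff_le[of p "Suc n" "smult a (\<phi> (Suc n))"]
    by (simp add: p'_def degree_phi)
  moreover have "coeff p' (Suc n) = 0"
    using kappa_nonzero[of "Suc n"] by (simp add: p'_def a_def coeff_phi_self)
  ultimately have IH: "p' = (\<Sum>m\<le>n. smult (toeplitz_inner s p' (\<phi> m)) (\<phi> m))"
    by (rule Suc.IH[OF degree_le_if_coeff_Suc_eq_0])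
  have p: "p = p' + smult a (\<phi> (Suc n))"
    by (simp add: p'_def)
  have "toeplitz_inner s p' (\<phi> (Suc n)) = 0"
    by (subst IH) (simp add: toeplitz_inner_sum_left toeplitz_inner_smult_left orthonormal)
  then have "toeplitz_inner s p (\<phi> m) = (if m = Suc n then a else toeplitz_inner s p' (\<phi> m))"
    if "m \<le> Suc n" for m
    using that by (simp add: p toeplitz_inner_add_left toeplitz_inner_smult_left orthonormal)
  then have "(\<Sum>m\<le>Suc n. smult (toeplitz_inner s p (\<phi> m)) (\<phi> m))
      = (\<Sum>m\<le>n. smult (toeplitz_inner s p' (\<phi> m)) (\<phi> m)) + smult a (\<phi> (Suc n))"
    by simp
  also have "\<dots> = p"
    by (simp add: p flip: IH)
  finally show ?case
    by simp
qed

lemma eq_0_if_orthogonal: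
  "degree p \<le> n \<Longrightarrow> (\<And>m. m \<le> n \<Longrightarrow> toeplitz_inner s p (\<phi> m) = 0) \<Longrightarrow> p = 0"
  by (subst fourier_expansion[of p n]) simp_all

lemma inner_lower_degree_left: "degree p < n \<Longrightarrow> toeplitz_inner s p (\<phi> n) = 0"
proof -
  assume "degree p < n"
  then obtain N where "n = Suc N" "degree p \<le> N"
    by (cases n) auto
  then show ?thesis
    by (subst fourier_expansion[of p N])
      (simp_all add: toeplitz_inner_sum_left toeplitz_inner_smult_left orthonormal)
qed

lemma inner_lower_degree_right: "degree p < n \<Longrightarrow> toeplitz_inner s (\<phi> n) p = 0"
  by (subst toeplitz_inner_commute) (simp add: inner_lower_degree_left)

lemma inner_phi_right: "degree p \<le> n \<Longrightarrow> toeplitz_inner s p (\<phi> n) = coeff p n / \<kappa> n"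
proof -
  assume d: "degree p \<le> n"
  have "coeff p n = (\<Sum>m\<le>n. toeplitz_inner s p (\<phi> m) * coeff (\<phi> m) n)"
    by (subst fourier_expansion[OF d]) (simp add: coeff_sum)
  also have "\<dots> = (\<Sum>m\<le>n. if m = n then toeplitz_inner s p (\<phi> n) * \<kappa> n else 0)"
    by (intro sum.cong refl) (auto simp: coeff_phi_self coeff_eq_0 degree_phi)
  finally show ?thesis
    using kappa_nonzero[of n] by (simp add: field_simps)
qed

lemma inner_phi_left: "degree p \<le> n \<Longrightarrow> toeplitz_inner s (\<phi> n) p = cnj (coeff p n) / \<kappa> n"
  by (subst toeplitz_inner_commute) (simp add: inner_phi_right cnj_kappa)

lemma inner_phi_pCons_0_phi:
  assumes "j < n"
  shows "toeplitz_inner s (\<phi> n) (pCons 0 (\<phi> j)) = (if Suc j = n then \<kappa> j / \<kappa> n else 0)"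
proof -
  obtain m where n: "n = Suc m"
    using assms by (cases n) auto
  have "degree (pCons 0 (\<phi> j)) \<le> n"
    using assms degree_pCons_le[of 0 "\<phi> j"] by (simp add: degree_phi)
  then have "toeplitz_inner s (\<phi> n) (pCons 0 (\<phi> j)) = cnj (coeff (\<phi> j) m) / \<kappa> n"
    by (simp add: inner_phi_left n)
  also have "coeff (\<phi> j) m = (if j = m then \<kappa> j else 0)"
    using assms n by (auto simp: coeff_phi_self degree_phi intro: coeff_eq_0)
  finally show ?thesis
    using n by (auto simp: cnj_kappa)
qed

lemma inner_pCons_0_phi_Suc: "toeplitz_inner s (pCons 0 (\<phi> n)) (\<phi> (Suc n)) = \<kappa> n / \<kappa> (Suc n)"
  using degree_pCons_le[of 0 "\<phi> n"] by (simp add: inner_phi_right degree_phi coeff_phi_self)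

end

lemma orthonormal_family_iff_is_opuc_family:
  "orthonormal_family s \<phi> \<longleftrightarrow> is_opuc_family (opuc_weight s) \<phi>"
  unfolding is_opuc_family_def orthonormal_family_def opuc_inner_eq_toeplitz_inner by blast

lemma orthonormal_family_unique:
  assumes "orthonormal_family s \<phi>" "orthonormal_family s \<psi>"
  shows "\<psi> n = \<phi> n"
proof (induction n rule: less_induct)
  case (less n)
  interpret A: orthonormal_family s \<phi> by (rule assms(1))
  interpret B: orthonormal_family s \<psi> by (rule assms(2))
  have "\<psi> n = (\<Sum>m\<le>n. smult (toeplitz_inner s (\<psi> n) (\<phi> m)) (\<phi> m))"
    by (rule A.fourier_expansion) (simp add: B.degree_phi)
  also have "\<dots> = (\<Sum>m\<le>n. if m = n then smult (toeplitz_inner s (\<psi> n) (\<phi> n)) (\<phi> n) else 0)"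
  proof (intro sum.cong refl)
    fix m
    assume "m \<in> {..n}"
    then show "smult (toeplitz_inner s (\<psi> n) (\<phi> m)) (\<phi> m)
        = (if m = n then smult (toeplitz_inner s (\<psi> n) (\<phi> n)) (\<phi> n) else 0)"
      using less[of m] B.orthonormal[of n m] by (cases "m = n") auto
  qed
  also have "toeplitz_inner s (\<psi> n) (\<phi> n) = B.\<kappa> n / A.\<kappa> n"
    by (simp add: A.inner_phi_right B.degree_phi B.coeff_phi_self)
  finally have \<psi>: "\<psi> n = smult (B.\<kappa> n / A.\<kappa> n) (\<phi> n)"
    by simp
  obtain ka kb where k: "A.\<kappa> n = of_real ka" "ka > 0" "B.\<kappa> n = of_real kb" "kb > 0"
    using A.kappa_real_pos B.kappa_real_pos by metis
  have "1 = toeplitz_inner s (\<psi> n) (\<psi> n)"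
    by (simp add: B.orthonormal)
  also have "\<dots> = of_real ((kb / ka)^2)"
    by (subst (1 2) \<psi>) (simp add: toeplitz_inner_smult_left toeplitz_inner_smult_right
        A.orthonormal k power2_eq_square)
  finally have "(kb / ka)^2 = 1"
    by (metis of_real_eq_1_iff)
  moreover have "kb / ka > 0"
    using k by simp
  ultimately have "kb / ka = 1"
    by (auto simp: power2_eq_1_iff)
  then show ?case
    using \<psi> k by simp
qed

context orthonormal_family
begin

lemma orthonormal_family_map_poly_cnj: "orthonormal_family s (\<lambda>n. map_poly cnj (\<phi> n))"
proof
  fix m n
  have degree: "degree (map_poly cnj (\<phi> n)) = n"
    by (simp add: degree_map_poly degree_phi)
  then have "lead_coeff (map_poly cnj (\<phi> n)) = lead_coeff (\<phi> n)"
    by (simp add: coeff_map_poly degree_phi coeff_phi_self cnj_kappa flip: \<kappa>_def)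
  then show "degree (map_poly cnj (\<phi> n)) = n"
    and "lead_coeff (map_poly cnj (\<phi> n)) \<in> \<real>"
    and "Re (lead_coeff (map_poly cnj (\<phi> n))) > 0"
    using degree lead_coeff_phi_real lead_coeff_phi_pos by simp_all
  show "toeplitz_inner s (map_poly cnj (\<phi> m)) (map_poly cnj (\<phi> n)) = (if m = n then 1 else 0)"
    by (simp add: toeplitz_inner_map_poly_cnj orthonormal)
qed

lemma map_poly_cnj_phi: "map_poly cnj (\<phi> n) = \<phi> n"
  by (rule orthonormal_family_unique[OF orthonormal_family_axioms orthonormal_family_map_poly_cnj])

lemma cnj_coeff_phi: "cnj (coeff (\<phi> n) j) = coeff (\<phi> n) j"
  using arg_cong[OF map_poly_cnj_phi[of n], of "\<lambda>p. coeff p j"] by (simp add: coeff_map_poly)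

lemma inner_monom_reflect_phi:
  assumes "k \<le> n"
  shows "toeplitz_inner s (monom 1 k) (reflect_poly (\<phi> n)) = toeplitz_inner s (\<phi> n) (monom 1 (n - k))"
proof -
  have "degree (reflect_poly (\<phi> n)) \<le> n"
    using degree_reflect_poly_le[of "\<phi> n"] by (simp add: degree_phi)
  then have "toeplitz_inner s (monom 1 k) (reflect_poly (\<phi> n))
      = (\<Sum>i=0..n. coeff (\<phi> n) (n - i) * opuc_moment s (int k - int i))"
    by (simp add: toeplitz_inner_monom_left[of _ n] coeff_reflect_poly degree_phi cnj_coeff_phi
        atLeast0AtMost)
  also have "\<dots> = (\<Sum>j=0..n. coeff (\<phi> n) j * opuc_moment s (int j - int (n - k)))"
    by (subst sum.atLeastAtMost_rev) (intro sum.cong refl, use assms in \<open>auto simp: of_nat_diff\<close>)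
  also have "\<dots> = toeplitz_inner s (\<phi> n) (monom 1 (n - k))"
    using toeplitz_inner_monom_right[of "\<phi> n" n] by (simp add: degree_phi atLeast0AtMost)
  finally show ?thesis .
qed

lemma inner_reflect_phi:
  assumes "degree p \<le> n"
  shows "toeplitz_inner s p (reflect_poly (\<phi> n)) = coeff p 0 / \<kappa> n"
proof -
  have kernel: "toeplitz_inner s (monom 1 k) (reflect_poly (\<phi> n)) = (if k = 0 then 1 / \<kappa> n else 0)"
    if "k \<le> n" for k
  proof (cases "k = 0")
    case True
    then show ?thesis
      using inner_monom_reflect_phi[of 0] inner_phi_left[of "monom 1 n" n]
      by (simp add: degree_monom_le)
  next
    case False
    then have "degree (monom (1::complex) (n - k)) < n"
      using that by (intro le_less_trans[OF degree_monom_le]) auto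
    then show ?thesis
      using that False by (simp add: inner_monom_reflect_phi inner_lower_degree_right)
  qed
  have "p = (\<Sum>k\<le>n. smult (coeff p k) (monom 1 k))"
    using poly_as_sum_of_monoms'[OF assms] by (simp add: smult_monom)
  then have "toeplitz_inner s p (reflect_poly (\<phi> n))
      = (\<Sum>k\<le>n. coeff p k * toeplitz_inner s (monom 1 k) (reflect_poly (\<phi> n)))"
    by (metis (no_types, lifting) toeplitz_inner_smult_left toeplitz_inner_sum_left sum.cong)
  also have "\<dots> = (\<Sum>k\<le>n. if k = 0 then coeff p 0 / \<kappa> n else 0)"
  proof (intro sum.cong refl)
    fix k
    assume "k \<in> {..n}"
    then show "coeff p k * toeplitz_inner s (monom 1 k) (reflect_poly (\<phi> n))
        = (if k = 0 then coeff p 0 / \<kappa> n else 0)"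
      by (subst kernel) auto
  qed
  finally show ?thesis
    by simp
qed

text \<open>\<open>\<kappa>\<^sub>n \<phi>\<^sub>n\<^sup>* - \<kappa>\<^sub>n\<^sub>-\<^sub>1 \<phi>\<^sub>n\<^sub>-\<^sub>1\<^sup>* - \<phi>\<^sub>n(0) \<phi>\<^sub>n\<close> is orthogonal to \<open>\<phi>\<^sub>0, \<dots>, \<phi>\<^sub>n\<close>, hence zero;
  its constant coefficient is the identity.\<close>

lemma kappa_Suc_sq:
  "\<kappa> (Suc m) * \<kappa> (Suc m) - \<kappa> m * \<kappa> m = coeff (\<phi> (Suc m)) 0 * coeff (\<phi> (Suc m)) 0"
proof -
  define n where "n = Suc m"
  define c where "c = coeff (\<phi> n) 0"
  define V where "V = smult (\<kappa> n) (reflect_poly (\<phi> n)) - smult (\<kappa> m) (reflect_poly (\<phi> m))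
    - smult c (\<phi> n)"
  have degree_V: "degree V \<le> n"
    using degree_reflect_poly_le[of "\<phi> n"] degree_reflect_poly_le[of "\<phi> m"]
    unfolding V_def n_def
    by (intro degree_diff_le order.trans[OF degree_smult_le]) (simp_all add: degree_phi)
  have orthogonal_V: "toeplitz_inner s (\<phi> j) V = 0" if "j \<le> n" for j
  proof (cases "j = n")
    case True
    have "toeplitz_inner s (\<phi> n) (reflect_poly (\<phi> m)) = 0"
      using degree_reflect_poly_le[of "\<phi> m"]
      by (intro inner_lower_degree_right) (simp add: degree_phi n_def)
    then show ?thesis
      unfolding V_def True
      by (simp add: toeplitz_inner_diff_right toeplitz_inner_smult_right inner_reflect_phi
          degree_phi cnj_kappa kappa_nonzero orthonormal c_def cnj_coeff_phi)
  next
    case False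
    then show ?thesis
      unfolding V_def using that
      by (simp add: toeplitz_inner_diff_right toeplitz_inner_smult_right inner_reflect_phi
          degree_phi cnj_kappa kappa_nonzero orthonormal n_def)
  qed
  have "V = 0"
    using degree_V by (rule eq_0_if_orthogonal) (subst toeplitz_inner_commute, simp add: orthogonal_V)
  then have "coeff V 0 = 0"
    by simp
  then show ?thesis
    by (simp add: V_def n_def c_def \<kappa>_def algebra_simps)
qed

text \<open>The recurrence \<open>z \<phi>\<^sub>n = (\<kappa>\<^sub>n/\<kappa>\<^sub>n\<^sub>+\<^sub>1) \<phi>\<^sub>n\<^sub>+\<^sub>1 - q \<phi>\<^sub>n + (\<kappa>\<^sub>n\<^sub>-\<^sub>1/\<kappa>\<^sub>n) q z \<phi>\<^sub>n\<^sub>-\<^sub>1\<close> with all terms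
  on one side. This side has vanishing constant and top coefficients, so it is \<open>z\<close> times a
  polynomial of degree \<open>< n\<close>, which is orthogonal to \<open>\<phi>\<^sub>0, \<dots>, \<phi>\<^sub>n\<^sub>-\<^sub>1\<close> because
  multiplication by \<open>z\<close> is an isometry.\<close>

lemma three_term_recurrence:
  fixes m :: nat
  defines "n \<equiv> Suc m"
  assumes nz: "coeff (\<phi> n) 0 \<noteq> 0"
  defines "q \<equiv> coeff (\<phi> (n+1)) 0 / \<kappa> (n+1) * \<kappa> n / coeff (\<phi> n) 0"
  shows "smult (\<kappa> n / \<kappa> (n+1)) (\<phi> (n+1)) - pCons 0 (\<phi> n) - smult q (\<phi> n)
    + smult (\<kappa> m / \<kappa> n * q) (pCons 0 (\<phi> m)) = 0" (is "?Y = 0")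
proof -
  have degree_pCons_phi: "degree (pCons 0 (\<phi> j)) \<le> Suc j" for j
    using degree_pCons_le[of 0 "\<phi> j"] by (simp add: degree_phi)
  have "coeff ?Y 0 = 0"
    using nz kappa_nonzero[of n] kappa_nonzero[of "n+1"] by (simp add: q_def field_simps)
  then obtain S where Y: "?Y = pCons 0 S"
    by (metis pCons_cases coeff_pCons_0)
  have "degree ?Y \<le> n + 1"
    using degree_pCons_phi[of n] degree_pCons_phi[of m] unfolding n_def
    by (intro degree_add_le degree_diff_le order.trans[OF degree_smult_le]) (simp_all add: degree_phi)
  moreover have "coeff ?Y (n+1) = 0"
    using kappa_nonzero[of "n+1"] degree_phi[of m] degree_phi[of n]
    by (simp add: coeff_phi_self coeff_eq_0 n_def)
  ultimately have "degree ?Y \<le> n"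
    by (simp add: degree_le_if_coeff_Suc_eq_0)
  then have degree_S: "degree S \<le> m"
    using Y by (cases "S = 0") (auto simp: n_def)
  have "toeplitz_inner s S (\<phi> j) = 0" if "j \<le> m" for j
  proof -
    have "toeplitz_inner s S (\<phi> j) = toeplitz_inner s ?Y (pCons 0 (\<phi> j))"
      by (simp only: Y toeplitz_inner_pCons_0)
    also have "\<dots> = 0"
      using that degree_pCons_phi[of j] inner_phi_pCons_0_phi[of j n]
      by (simp add: toeplitz_inner_linear_left toeplitz_inner_pCons_0 orthonormal
          inner_lower_degree_right n_def)
    finally show ?thesis .
  qed
  then have "S = 0"
    by (rule eq_0_if_orthogonal[OF degree_S])
  then show ?thesis
    using Y by simp
qed

definition gram_schmidt_residual :: "nat \<Rightarrow> complex poly" where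
  "gram_schmidt_residual n =
     monom 1 n - (\<Sum>m<n. smult (toeplitz_inner s (monom 1 n) (\<phi> m)) (\<phi> m))"

lemma phi_eq_smult_gram_schmidt_residual: "\<phi> n = smult (\<kappa> n) (gram_schmidt_residual n)"
proof -
  have degree: "degree (monom (1::complex) n) \<le> n"
    by (simp add: degree_monom_le)
  have "monom 1 n = (\<Sum>m<n. smult (toeplitz_inner s (monom 1 n) (\<phi> m)) (\<phi> m))
      + smult (toeplitz_inner s (monom 1 n) (\<phi> n)) (\<phi> n)"
    by (subst fourier_expansion[OF degree]) (simp add: lessThan_Suc_atMost[symmetric])
  also have "toeplitz_inner s (monom 1 n) (\<phi> n) = 1 / \<kappa> n"
    by (simp add: inner_phi_right[OF degree])
  finally have "gram_schmidt_residual n = smult (1 / \<kappa> n) (\<phi> n)"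
    by (simp add: gram_schmidt_residual_def algebra_simps)
  then show ?thesis
    using kappa_nonzero[of n] by simp
qed

lemma
  shows gram_schmidt_residual_norm_pos:
      "Re (toeplitz_inner s (gram_schmidt_residual n) (gram_schmidt_residual n)) > 0"
    and kappa_eq_gram_schmidt_residual_norm:
      "\<kappa> n = of_real (1 / sqrt (Re (toeplitz_inner s (gram_schmidt_residual n) (gram_schmidt_residual n))))"
proof -
  obtain k where k: "\<kappa> n = of_real k" "k > 0"
    using kappa_real_pos by blast
  have "gram_schmidt_residual n = smult (1 / \<kappa> n) (\<phi> n)"
    using phi_eq_smult_gram_schmidt_residual[of n] kappa_nonzero[of n] by simp
  then have norm: "toeplitz_inner s (gram_schmidt_residual n) (gram_schmidt_residual n) = of_real (1 / (k * k))"
    using k by (simp add: toeplitz_inner_smult_left toeplitz_inner_smult_right orthonormal)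
  then show "Re (toeplitz_inner s (gram_schmidt_residual n) (gram_schmidt_residual n)) > 0"
    using k by simp
  have "sqrt (1 / (k * k)) = 1 / k"
    using k(2) by (simp add: real_sqrt_divide real_sqrt_mult_self)
  then show "\<kappa> n = of_real (1 / sqrt (Re (toeplitz_inner s (gram_schmidt_residual n) (gram_schmidt_residual n))))"
    using norm k by simp
qed

end

section \<open>Differentiation in the parameter\<close>

definition has_coeff_derivative ::
    "(real \<Rightarrow> 'a::real_normed_field poly) \<Rightarrow> 'a poly \<Rightarrow> real \<Rightarrow> bool" where
  "has_coeff_derivative F D t \<longleftrightarrow> (\<forall>j. ((\<lambda>s. coeff (F s) j) has_vector_derivative coeff D j) (at t))"

lemma has_coeff_derivativeD:
  "has_coeff_derivative F D t \<Longrightarrow> ((\<lambda>s. coeff (F s) j) has_vector_derivative coeff D j) (at t)"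
  by (simp add: has_coeff_derivative_def)

lemma has_coeff_derivative_const: "has_coeff_derivative (\<lambda>s. p) 0 t"
  by (simp add: has_coeff_derivative_def)

lemma has_coeff_derivative_add:
  "has_coeff_derivative F D t \<Longrightarrow> has_coeff_derivative G E t
    \<Longrightarrow> has_coeff_derivative (\<lambda>s. F s + G s) (D + E) t"
  by (auto simp: has_coeff_derivative_def intro!: derivative_intros)

lemma has_coeff_derivative_diff:
  "has_coeff_derivative F D t \<Longrightarrow> has_coeff_derivative G E t
    \<Longrightarrow> has_coeff_derivative (\<lambda>s. F s - G s) (D - E) t"
  by (auto simp: has_coeff_derivative_def intro!: derivative_intros)

lemma has_coeff_derivative_smult:
  assumes "(c has_vector_derivative c') (at t)" "has_coeff_derivative F D t"
  shows "has_coeff_derivative (\<lambda>s. smult (c s) (F s)) (smult (c t) D + smult c' (F t)) t"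
  unfolding has_coeff_derivative_def
proof
  fix j
  show "((\<lambda>s. coeff (smult (c s) (F s)) j) has_vector_derivative
      coeff (smult (c t) D + smult c' (F t)) j) (at t)"
    using has_vector_derivative_mult[OF assms(1) has_coeff_derivativeD[OF assms(2)]] by simp
qed

lemma has_coeff_derivative_sum:
  "(\<And>i. i \<in> A \<Longrightarrow> has_coeff_derivative (F i) (D i) t)
    \<Longrightarrow> has_coeff_derivative (\<lambda>s. \<Sum>i\<in>A. F i s) (\<Sum>i\<in>A. D i) t"
  by (induction A rule: infinite_finite_induct)
    (simp_all add: has_coeff_derivative_const has_coeff_derivative_add)

lemma has_coeff_derivative_transform_open:
  assumes "has_coeff_derivative F D t" "open S" "t \<in> S" "\<And>s. s \<in> S \<Longrightarrow> F s = G s"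
  shows "has_coeff_derivative G D t"
  unfolding has_coeff_derivative_def
proof
  fix j
  show "((\<lambda>s. coeff (G s) j) has_vector_derivative coeff D j) (at t)"
    by (rule has_vector_derivative_transform_within_open[OF has_coeff_derivativeD[OF assms(1)]])
      (use assms in auto)
qed

lemma has_coeff_derivative_poly:
  assumes "has_coeff_derivative F D t" "\<And>s. degree (F s) \<le> N" "degree D \<le> N"
  shows "((\<lambda>s. poly (F s) z) has_vector_derivative poly D z) (at t)"
proof -
  have poly_eq: "poly p z = (\<Sum>j\<le>N. coeff p j * z^j)" if "degree p \<le> N" for p
  proof -
    have "poly p z = poly (\<Sum>i\<le>N. monom (coeff p i) i) z"
      using poly_as_sum_of_monoms'[OF that] by simp
    then show ?thesis
      by (simp add: poly_sum poly_monom)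
  qed
  have "((\<lambda>s. \<Sum>j\<le>N. coeff (F s) j * z^j) has_vector_derivative (\<Sum>j\<le>N. coeff D j * z^j)) (at t)"
    by (intro has_vector_derivative_sum has_vector_derivative_mult_left has_coeff_derivativeD[OF assms(1)])
  then show ?thesis
    by (simp only: poly_eq assms(2,3))
qed

lemma map_poly_cnj_has_coeff_derivative:
  assumes "has_coeff_derivative F D t" "\<And>s. map_poly cnj (F s) = F s"
  shows "map_poly cnj D = D"
proof (rule poly_eqI)
  fix j
  have "cnj (coeff (F s) j) = coeff (F s) j" for s
    using arg_cong[OF assms(2)[of s], of "\<lambda>p. coeff p j"] by (simp add: coeff_map_poly)
  then have "((\<lambda>s. coeff (F s) j) has_vector_derivative cnj (coeff D j)) (at t)"
    using has_vector_derivative_cnj[OF has_coeff_derivativeD[OF assms(1), of j]] by simp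
  then have "cnj (coeff D j) = coeff D j"
    by (rule vector_derivative_unique_at[OF _ has_coeff_derivativeD[OF assms(1)]])
  then show "coeff (map_poly cnj D) j = coeff D j"
    by (simp add: coeff_map_poly)
qed

lemma toeplitz_inner_pCons_0_left:
  assumes "degree p \<le> N" "degree q \<le> N"
  shows "toeplitz_inner s (pCons 0 p) q
    = (\<Sum>j\<le>N. \<Sum>k\<le>N. coeff p j * cnj (coeff q k) * opuc_moment s (int j - int k + 1))"
proof -
  have degree: "degree (pCons 0 p) \<le> Suc N"
    using assms(1) degree_pCons_le[of 0 p] by simp
  show ?thesis
    unfolding toeplitz_inner_degree_le[OF degree assms(2)]
    by (simp add: sum.atMost_Suc_shift del: sum.atMost_Suc) (simp add: algebra_simps)
qed

lemma toeplitz_inner_pCons_0_right: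
  assumes "degree p \<le> N" "degree q \<le> N"
  shows "toeplitz_inner s p (pCons 0 q)
    = (\<Sum>j\<le>N. \<Sum>k\<le>N. coeff p j * cnj (coeff q k) * opuc_moment s (int j - int k - 1))"
proof -
  have degree: "degree (pCons 0 q) \<le> Suc N"
    using assms(2) degree_pCons_le[of 0 q] by simp
  show ?thesis
    unfolding toeplitz_inner_degree_le[OF assms(1) degree]
    by (simp add: sum.atMost_Suc_shift del: sum.atMost_Suc) (simp add: algebra_simps)
qed

text \<open>Differentiating the moments \<open>I\<^sub>\<bar>\<^sub>d\<^sub>\<bar>(s) / I\<^sub>0(s)\<close> turns multiplication by the weight's
  derivative into \<open>(z + 1/z)/2 - I\<^sub>1/I\<^sub>0\<close>, which acts on the inner product through the shifts
  \<open>p \<mapsto> z p\<close>.\<close>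

lemma toeplitz_inner_has_derivative:
  assumes P: "has_coeff_derivative P P' t" and Q: "has_coeff_derivative Q Q' t"
    and degree: "\<And>s. degree (P s) \<le> N" "\<And>s. degree (Q s) \<le> N" "degree P' \<le> N" "degree Q' \<le> N"
  shows "((\<lambda>s. toeplitz_inner s (P s) (Q s)) has_vector_derivative
     toeplitz_inner t P' (Q t) + toeplitz_inner t (P t) Q'
     + (toeplitz_inner t (pCons 0 (P t)) (Q t) + toeplitz_inner t (P t) (pCons 0 (Q t))) / 2
     - opuc_moment t 1 * toeplitz_inner t (P t) (Q t)) (at t)"
proof -
  let ?p = "\<lambda>s j. coeff (P s) j" and ?q = "\<lambda>s k. coeff (Q s) k"
  let ?\<mu> = "\<lambda>j k. opuc_moment t (int j - int k)"
  have "((\<lambda>s. \<Sum>j\<le>N. \<Sum>k\<le>N. ?p s j * cnj (?q s k) * opuc_moment s (int j - int k)) has_vector_derivative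
     (\<Sum>j\<le>N. \<Sum>k\<le>N. (?p t j * cnj (?q t k) * ((opuc_moment t (int j - int k + 1)
        + opuc_moment t (int j - int k - 1)) / 2 - opuc_moment t 1 * ?\<mu> j k)
        + (?p t j * cnj (coeff Q' k) + coeff P' j * cnj (?q t k)) * ?\<mu> j k))) (at t)"
    by (intro has_vector_derivative_sum has_vector_derivative_mult has_vector_derivative_cnj
        has_coeff_derivativeD[OF P] has_coeff_derivativeD[OF Q]
        opuc_moment_has_derivative[of "int _ - int _" t, simplified])
  moreover have "(\<Sum>j\<le>N. \<Sum>k\<le>N. (?p t j * cnj (?q t k) * ((opuc_moment t (int j - int k + 1)
        + opuc_moment t (int j - int k - 1)) / 2 - opuc_moment t 1 * ?\<mu> j k)
        + (?p t j * cnj (coeff Q' k) + coeff P' j * cnj (?q t k)) * ?\<mu> j k))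
     = toeplitz_inner t P' (Q t) + toeplitz_inner t (P t) Q'
     + (toeplitz_inner t (pCons 0 (P t)) (Q t) + toeplitz_inner t (P t) (pCons 0 (Q t))) / 2
     - opuc_moment t 1 * toeplitz_inner t (P t) (Q t)"
    unfolding toeplitz_inner_degree_le[OF degree(3,2)] toeplitz_inner_degree_le[OF degree(1,4)]
      toeplitz_inner_pCons_0_left[OF degree(1,2)] toeplitz_inner_pCons_0_right[OF degree(1,2)]
      toeplitz_inner_degree_le[OF degree(1,2)]
    by (simp add: algebra_simps sum.distrib sum_distrib_left sum_divide_distrib sum_subtractf)
      (simp add: add_divide_distrib sum.distrib)
  ultimately show ?thesis
    by (simp add: toeplitz_inner_degree_le[OF degree(1,2)])
qed

lemma has_coeff_derivative_normalize:
  assumes V: "has_coeff_derivative V V' t" and degree: "\<And>s. degree (V s) \<le> N" "degree V' \<le> N"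
    and pos: "Re (toeplitz_inner t (V t) (V t)) > 0"
  shows "\<exists>D. has_coeff_derivative
      (\<lambda>s. smult (of_real (1 / sqrt (Re (toeplitz_inner s (V s) (V s))))) (V s)) D t \<and> degree D \<le> N"
proof -
  define \<beta> where "\<beta> = (\<lambda>s. Re (toeplitz_inner s (V s) (V s)))"
  obtain \<beta>' where "((\<lambda>s. toeplitz_inner s (V s) (V s)) has_vector_derivative \<beta>') (at t)"
    using toeplitz_inner_has_derivative[OF V V degree(1,1,2,2)] by blast
  then have "(\<beta> has_real_derivative Re \<beta>') (at t)"
    using bounded_linear.has_vector_derivative[OF bounded_linear_Re]
    by (simp add: \<beta>_def has_real_derivative_iff_has_vector_derivative)
  then have "((\<lambda>s. sqrt (\<beta> s)) has_real_derivative inverse (sqrt (\<beta> t)) / 2 * Re \<beta>') (at t)"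
    using pos by (intro DERIV_chain2[OF DERIV_real_sqrt]) (simp_all add: \<beta>_def)
  then obtain k' where "((\<lambda>s. inverse (sqrt (\<beta> s))) has_real_derivative k') (at t)"
    using pos by (metis DERIV_inverse_fun \<beta>_def real_sqrt_gt_0_iff less_irrefl)
  then have "((\<lambda>s. complex_of_real (1 / sqrt (\<beta> s))) has_vector_derivative of_real k') (at t)"
    using has_vector_derivative_of_real by (simp only: inverse_eq_divide)
  from has_coeff_derivative_smult[OF this V]
  show ?thesis
    unfolding \<beta>_def
    by (intro exI conjI) (auto intro!: degree_add_le order.trans[OF degree_smult_le] degree)
qed

section \<open>The deformation of the weight\<close>

text \<open>The family is only specified for positive parameters; \<open>phi_ext\<close> freezes it at \<open>t\<close>
  for parameters \<open>\<le> 0\<close>, which does not change derivatives at \<open>t > 0\<close> but makes it an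
  orthonormal family for every parameter.\<close>

locale opuc_deformation =
  fixes phi :: "nat \<Rightarrow> real \<Rightarrow> complex poly" and t :: real
  assumes t_pos: "t > 0"
    and opuc_family: "\<And>s. s > 0 \<Longrightarrow> is_opuc_family (opuc_weight s) (\<lambda>n. phi n s)"
begin

definition param :: "real \<Rightarrow> real" where
  "param s = (if s > 0 then s else t)"

definition phi_ext :: "nat \<Rightarrow> real \<Rightarrow> complex poly" where
  "phi_ext n s = phi n (param s)"

lemma orthonormal_family_param: "orthonormal_family (param s) (\<lambda>n. phi_ext n s)"
  using opuc_family[of "param s"] t_pos
  by (simp add: phi_ext_def param_def orthonormal_family_iff_is_opuc_family)

lemma orthonormal_family_pos: "s > 0 \<Longrightarrow> orthonormal_family s (\<lambda>n. phi_ext n s)"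
  using orthonormal_family_param[of s] by (simp add: param_def)

lemma degree_phi_ext: "degree (phi_ext n s) = n"
  using orthonormal_family.degree_phi[OF orthonormal_family_param] .

lemma map_poly_cnj_phi_ext: "map_poly cnj (phi_ext n s) = phi_ext n s"
  using orthonormal_family.map_poly_cnj_phi[OF orthonormal_family_param] .

lemma phi_ext_eq: "s > 0 \<Longrightarrow> phi_ext n s = phi n s"
  by (simp add: phi_ext_def param_def)

lemma has_vector_derivative_eq_on_pos:
  assumes "(f has_vector_derivative D) (at t)" "\<And>s. s > 0 \<Longrightarrow> f s = g s"
  shows "(g has_vector_derivative D) (at t)"
  by (rule has_vector_derivative_transform_within_open[OF assms(1), of "{0<..}"])
    (use assms t_pos in auto)

sublocale T: orthonormal_family t "\<lambda>n. phi_ext n t"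
  by (rule orthonormal_family_pos[OF t_pos])

lemma gram_schmidt_residual_has_coeff_derivative:
  assumes "\<And>m. m < n \<Longrightarrow> has_coeff_derivative (phi_ext m) (D m) t \<and> degree (D m) \<le> m"
  defines "V \<equiv> \<lambda>s. monom 1 n - (\<Sum>m<n. smult (toeplitz_inner s (monom 1 n) (phi_ext m s)) (phi_ext m s))"
  shows "\<exists>V'. has_coeff_derivative V V' t \<and> degree V' \<le> n"
proof -
  have degree_monom: "degree (monom (1::complex) n) \<le> n"
    by (simp add: degree_monom_le)
  have D: "has_coeff_derivative (phi_ext m) (D m) t" "degree (D m) \<le> n" if "m < n" for m
    using assms(1)[OF that] that by auto
  define c' where "c' m = toeplitz_inner t 0 (phi_ext m t) + toeplitz_inner t (monom 1 n) (D m)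
      + (toeplitz_inner t (pCons 0 (monom 1 n)) (phi_ext m t)
        + toeplitz_inner t (monom 1 n) (pCons 0 (phi_ext m t))) / 2
      - opuc_moment t 1 * toeplitz_inner t (monom 1 n) (phi_ext m t)" for m
  have c': "((\<lambda>s. toeplitz_inner s (monom 1 n) (phi_ext m s)) has_vector_derivative c' m) (at t)"
    if "m < n" for m
    unfolding c'_def
    by (rule toeplitz_inner_has_derivative[OF has_coeff_derivative_const D(1)[OF that]])
      (use that D(2) degree_monom in \<open>auto simp: degree_phi_ext\<close>)
  have "has_coeff_derivative V (0 - (\<Sum>m<n. smult (toeplitz_inner t (monom 1 n) (phi_ext m t)) (D m)
      + smult (c' m) (phi_ext m t))) t"
    unfolding V_def
    by (intro has_coeff_derivative_diff has_coeff_derivative_const has_coeff_derivative_sum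
        has_coeff_derivative_smult c' D) simp_all
  moreover have "degree (0 - (\<Sum>m<n. smult (toeplitz_inner t (monom 1 n) (phi_ext m t)) (D m)
      + smult (c' m) (phi_ext m t))) \<le> n"
    using D(2) by (intro degree_diff_le degree_sum_le degree_add_le order.trans[OF degree_smult_le])
      (auto simp: degree_phi_ext)
  ultimately show ?thesis
    by blast
qed

lemma exists_phi_ext_derivative: "\<exists>D. has_coeff_derivative (phi_ext n) D t \<and> degree D \<le> n"
proof (induction n rule: less_induct)
  case (less n)
  define V where
    "V = (\<lambda>s. monom 1 n - (\<Sum>m<n. smult (toeplitz_inner s (monom 1 n) (phi_ext m s)) (phi_ext m s)))"
  have "\<exists>D. \<forall>m. m < n \<longrightarrow> has_coeff_derivative (phi_ext m) (D m) t \<and> degree (D m) \<le> m"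
    by (rule choice) (use less in blast)
  then obtain D where "\<And>m. m < n \<Longrightarrow> has_coeff_derivative (phi_ext m) (D m) t \<and> degree (D m) \<le> m"
    by blast
  then have "\<exists>V'. has_coeff_derivative V V' t \<and> degree V' \<le> n"
    unfolding V_def by (rule gram_schmidt_residual_has_coeff_derivative)
  then obtain V' where V': "has_coeff_derivative V V' t" "degree V' \<le> n"
    by blast
  have degree_V: "degree (V s) \<le> n" for s
    unfolding V_def
    by (intro degree_diff_le degree_monom_le degree_sum_le order.trans[OF degree_smult_le])
      (auto simp: degree_phi_ext)
  have "V t = T.gram_schmidt_residual n"
    unfolding V_def T.gram_schmidt_residual_def ..
  then have "Re (toeplitz_inner t (V t) (V t)) > 0"
    using T.gram_schmidt_residual_norm_pos by simp
  then obtain D where D: "has_coeff_derivative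
      (\<lambda>s. smult (of_real (1 / sqrt (Re (toeplitz_inner s (V s) (V s))))) (V s)) D t" "degree D \<le> n"
    using has_coeff_derivative_normalize[OF V'(1) degree_V V'(2)] by blast
  have "smult (of_real (1 / sqrt (Re (toeplitz_inner s (V s) (V s))))) (V s) = phi_ext n s"
    if "s > 0" for s
  proof -
    interpret S: orthonormal_family s "\<lambda>n. phi_ext n s"
      by (rule orthonormal_family_pos[OF that])
    have "V s = S.gram_schmidt_residual n"
      unfolding V_def S.gram_schmidt_residual_def ..
    then show ?thesis
      by (simp only: S.phi_eq_smult_gram_schmidt_residual[of n] S.kappa_eq_gram_schmidt_residual_norm[of n])
  qed
  then have "has_coeff_derivative (phi_ext n) D t"
    by (intro has_coeff_derivative_transform_open[OF D(1), of "{0<..}"]) (auto simp: t_pos)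
  with D(2) show ?case
    by blast
qed

definition phi' :: "nat \<Rightarrow> complex poly" where
  "phi' = (SOME D. \<forall>n. has_coeff_derivative (phi_ext n) (D n) t \<and> degree (D n) \<le> n)"

lemma
  shows phi'_has_coeff_derivative: "has_coeff_derivative (phi_ext n) (phi' n) t"
    and degree_phi': "degree (phi' n) \<le> n"
proof -
  have "\<exists>D. \<forall>n. has_coeff_derivative (phi_ext n) (D n) t \<and> degree (D n) \<le> n"
    by (rule choice) (blast intro: exists_phi_ext_derivative)
  then have "\<forall>n. has_coeff_derivative (phi_ext n) (phi' n) t \<and> degree (phi' n) \<le> n"
    unfolding phi'_def by (rule someI_ex)
  then show "has_coeff_derivative (phi_ext n) (phi' n) t" "degree (phi' n) \<le> n"
    by auto
qed

lemma map_poly_cnj_phi': "map_poly cnj (phi' n) = phi' n"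
  by (rule map_poly_cnj_has_coeff_derivative[OF phi'_has_coeff_derivative map_poly_cnj_phi_ext])

lemma derivative_of_orthonormality:
  "toeplitz_inner t (phi' n) (phi_ext j t) + toeplitz_inner t (phi_ext n t) (phi' j)
   + (toeplitz_inner t (pCons 0 (phi_ext n t)) (phi_ext j t)
      + toeplitz_inner t (phi_ext n t) (pCons 0 (phi_ext j t))) / 2
   = (if n = j then opuc_moment t 1 else 0)"
proof -
  define N where "N = max n j"
  have "((\<lambda>s. toeplitz_inner s (phi_ext n s) (phi_ext j s)) has_vector_derivative
     toeplitz_inner t (phi' n) (phi_ext j t) + toeplitz_inner t (phi_ext n t) (phi' j)
     + (toeplitz_inner t (pCons 0 (phi_ext n t)) (phi_ext j t)
        + toeplitz_inner t (phi_ext n t) (pCons 0 (phi_ext j t))) / 2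
     - opuc_moment t 1 * toeplitz_inner t (phi_ext n t) (phi_ext j t)) (at t)"
    using degree_phi'[of n] degree_phi'[of j]
    by (intro toeplitz_inner_has_derivative[where N=N] phi'_has_coeff_derivative)
      (auto simp: degree_phi_ext N_def)
  moreover have "((\<lambda>s. toeplitz_inner s (phi_ext n s) (phi_ext j s)) has_vector_derivative 0) (at t)"
    by (rule has_vector_derivative_eq_on_pos[OF has_vector_derivative_const])
      (simp add: orthonormal_family.orthonormal[OF orthonormal_family_pos])
  ultimately show ?thesis
    using vector_derivative_unique_at T.orthonormal[of n j] by fastforce
qed

lemma inner_phi'_self:
  "2 * toeplitz_inner t (phi' n) (phi_ext n t)
   = opuc_moment t 1 - toeplitz_inner t (pCons 0 (phi_ext n t)) (phi_ext n t)"
proof -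
  have real: "map_poly cnj (pCons 0 (phi_ext n t)) = pCons 0 (phi_ext n t)"
    using map_poly_cnj_phi_ext[of n t] by (simp add: map_poly_pCons)
  have "toeplitz_inner t (phi_ext n t) (phi' n) = toeplitz_inner t (phi' n) (phi_ext n t)"
    by (subst toeplitz_inner_commute)
      (simp add: cnj_toeplitz_inner_real_poly map_poly_cnj_phi' map_poly_cnj_phi_ext)
  moreover have "toeplitz_inner t (phi_ext n t) (pCons 0 (phi_ext n t))
      = toeplitz_inner t (pCons 0 (phi_ext n t)) (phi_ext n t)"
    by (subst toeplitz_inner_commute)
      (simp add: cnj_toeplitz_inner_real_poly real map_poly_cnj_phi_ext)
  ultimately show ?thesis
    using derivative_of_orthonormality[of n n] by (simp add: field_simps)
qed

lemma inner_phi'_lower: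
  assumes "j < n"
  shows "2 * toeplitz_inner t (phi' n) (phi_ext j t)
    = - toeplitz_inner t (pCons 0 (phi_ext n t)) (phi_ext j t)
      - (if Suc j = n then T.\<kappa> j / T.\<kappa> n else 0)"
proof -
  have "toeplitz_inner t (phi_ext n t) (phi' j) = 0"
    using degree_phi'[of j] assms by (intro T.inner_lower_degree_right) simp
  then show ?thesis
    using derivative_of_orthonormality[of n j] T.inner_phi_pCons_0_phi[OF assms] assms
    by (cases "Suc j = n") (simp_all add: field_simps add_eq_0_iff)
qed

text \<open>Both sides have degree \<open>\<le> n + 1\<close> and, by the two previous lemmas, the same inner products
  with \<open>\<phi>\<^sub>0, \<dots>, \<phi>\<^sub>n\<^sub>+\<^sub>1\<close>.\<close>

lemma phi'_expansion:
  fixes k :: nat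
  defines "n \<equiv> Suc k"
  shows "smult 2 (phi' n) = smult (opuc_moment t 1) (phi_ext n t) - pCons 0 (phi_ext n t)
     + smult (T.\<kappa> n / T.\<kappa> (n+1)) (phi_ext (n+1) t) - smult (T.\<kappa> k / T.\<kappa> n) (phi_ext k t)"
    (is "_ = ?R")
proof -
  define X where "X = smult 2 (phi' n) - ?R"
  have "degree X \<le> n + 1"
    using degree_phi'[of n] degree_pCons_le[of 0 "phi_ext n t"] unfolding X_def
    by (intro degree_diff_le degree_add_le order.trans[OF degree_smult_le])
      (simp_all add: degree_phi_ext n_def)
  moreover have "toeplitz_inner t X (phi_ext j t) = 0" if "j \<le> n + 1" for j
  proof -
    have "j = n + 1 \<or> j = n \<or> j < n"
      using that by linarith
    then consider "j = n + 1" | "j = n" | "j < n"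
      by blast
    then show ?thesis
    proof cases
      case 1
      have "toeplitz_inner t (phi' n) (phi_ext j t) = 0"
        using degree_phi'[of n] 1 by (intro T.inner_lower_degree_left) simp
      then show ?thesis
        using 1 T.inner_pCons_0_phi_Suc[of n]
        by (simp add: X_def toeplitz_inner_linear_left T.orthonormal n_def)
    next
      case 2
      then show ?thesis
        using inner_phi'_self[of n] by (simp add: X_def toeplitz_inner_linear_left T.orthonormal n_def)
    next
      case 3
      then show ?thesis
        using inner_phi'_lower[OF 3] by (auto simp: X_def toeplitz_inner_linear_left T.orthonormal n_def)
    qed
  qed
  ultimately have "X = 0"
    by (rule T.eq_0_if_orthogonal)
  then show ?thesis
    by (simp add: X_def)
qed

text \<open>\<open>verblunsky_ratio n\<close> is the quantity \<open>\<phi>\<^sub>n\<^sub>+\<^sub>1(0) \<kappa>\<^sub>n / (\<kappa>\<^sub>n\<^sub>+\<^sub>1 \<phi>\<^sub>n(0))\<close> of the theorem, the ratio of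
  two consecutive Verblunsky coefficients.\<close>

definition verblunsky_ratio :: "nat \<Rightarrow> complex" where
  "verblunsky_ratio n = coeff (phi_ext (n+1) t) 0 / T.\<kappa> (n+1) * T.\<kappa> n / coeff (phi_ext n t) 0"

lemma phi'_formula:
  assumes "coeff (phi_ext (Suc k) t) 0 \<noteq> 0"
  defines "n \<equiv> Suc k" and "q \<equiv> verblunsky_ratio (Suc k)"
  shows "smult 2 (phi' n) = smult (opuc_moment t 1 + q) (phi_ext n t)
    - smult (T.\<kappa> k / T.\<kappa> n) (phi_ext k t) - smult (T.\<kappa> k / T.\<kappa> n * q) (pCons 0 (phi_ext k t))"
proof -
  have "smult (T.\<kappa> n / T.\<kappa> (n+1)) (phi_ext (n+1) t) - pCons 0 (phi_ext n t)
      = smult q (phi_ext n t) - smult (T.\<kappa> k / T.\<kappa> n * q) (pCons 0 (phi_ext k t))"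
    using T.three_term_recurrence[of k] assms(1)
    by (simp add: n_def q_def verblunsky_ratio_def algebra_simps eq_neg_iff_add_eq_0 add_eq_0_iff)
  then show ?thesis
    unfolding n_def phi'_expansion by (simp add: algebra_simps smult_add_left n_def)
qed

lemma poly_phi_has_derivative: "((\<lambda>s. poly (phi n s) z) has_vector_derivative poly (phi' n) z) (at t)"
  using has_coeff_derivative_poly[OF phi'_has_coeff_derivative _ degree_phi', of n]
  by (rule has_vector_derivative_eq_on_pos) (simp_all add: degree_phi_ext phi_ext_eq)

lemma lead_coeff_phi_has_derivative:
  "((\<lambda>s. lead_coeff (phi n s)) has_vector_derivative coeff (phi' n) n) (at t)"
  using has_coeff_derivativeD[OF phi'_has_coeff_derivative, of n n]
  by (rule has_vector_derivative_eq_on_pos) (simp add: degree_phi_ext flip: phi_ext_eq)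

lemma phi_0_has_derivative: "((\<lambda>s. poly (phi 0 s) z) has_vector_derivative 0) (at t)"
  by (rule has_vector_derivative_eq_on_pos[OF has_vector_derivative_const[of 1]])
    (simp add: orthonormal_family.phi_0[OF orthonormal_family_pos] flip: phi_ext_eq)

lemma poly_phi'_formula:
  assumes "coeff (phi_ext (Suc k) t) 0 \<noteq> 0"
  defines "n \<equiv> Suc k" and "q \<equiv> verblunsky_ratio (Suc k)"
  shows "2 * poly (phi' n) z = (opuc_moment t 1 + q) * poly (phi_ext n t) z
    - T.\<kappa> k / T.\<kappa> n * (1 + q * z) * poly (phi_ext k t) z"
  using arg_cong[OF phi'_formula[OF assms(1)], of "\<lambda>p. poly p z"]
  by (simp add: n_def q_def algebra_simps add_divide_distrib)

lemma lead_coeff_phi'_formula: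
  assumes "coeff (phi_ext (Suc k) t) 0 \<noteq> 0"
  defines "n \<equiv> Suc k"
  shows "2 / T.\<kappa> n * coeff (phi' n) n
    = opuc_moment t 1 + coeff (phi_ext (n+1) t) 0 / T.\<kappa> (n+1) * coeff (phi_ext n t) 0 / T.\<kappa> n"
proof -
  let ?r = "opuc_moment t 1" and ?q = "verblunsky_ratio n" and ?c = "\<lambda>m. coeff (phi_ext m t) 0"
  have nonzero: "?c n \<noteq> 0" "T.\<kappa> n \<noteq> 0" "T.\<kappa> (n+1) \<noteq> 0"
    using assms(1) T.kappa_nonzero by (simp_all add: n_def)
  have "coeff (phi_ext k t) n = 0"
    using degree_phi_ext[of k t] by (intro coeff_eq_0) (simp add: n_def)
  then have "2 * coeff (phi' n) n = (?r + ?q) * T.\<kappa> n - T.\<kappa> k / T.\<kappa> n * ?q * T.\<kappa> k"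
    using arg_cong[OF phi'_formula[OF assms(1)], of "\<lambda>p. coeff p n"]
    by (simp add: n_def T.coeff_phi_self)
  then have "2 / T.\<kappa> n * coeff (phi' n) n
      = ?r + ?q * ((T.\<kappa> n * T.\<kappa> n - T.\<kappa> k * T.\<kappa> k) / (T.\<kappa> n * T.\<kappa> n))"
    using nonzero by (simp add: field_simps)
  also have "T.\<kappa> n * T.\<kappa> n - T.\<kappa> k * T.\<kappa> k = ?c n * ?c n"
    unfolding n_def by (rule T.kappa_Suc_sq)
  also have "?r + ?q * (?c n * ?c n / (T.\<kappa> n * T.\<kappa> n)) = ?r + ?c (n+1) / T.\<kappa> (n+1) * ?c n / T.\<kappa> n"
    using nonzero by (simp add: verblunsky_ratio_def field_simps)
  finally show ?thesis .
qed

lemma coeff_0_phi'_formula: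
  assumes "coeff (phi_ext (Suc k) t) 0 \<noteq> 0"
  defines "n \<equiv> Suc k" and "q \<equiv> verblunsky_ratio (Suc k)"
  shows "2 / coeff (phi_ext n t) 0 * coeff (phi' n) 0
    = opuc_moment t 1 + q - coeff (phi_ext k t) 0 / coeff (phi_ext n t) 0 * T.\<kappa> k / T.\<kappa> n"
  using arg_cong[OF phi'_formula[OF assms(1)], of "\<lambda>p. coeff p 0"] assms(1)
  by (simp add: n_def q_def field_simps)

lemma phi_ext_t: "phi_ext n t = phi n t"
  by (rule phi_ext_eq[OF t_pos])

lemma kappa_t: "T.\<kappa> n = lead_coeff (phi n t)"
  using T.coeff_phi_self[of n] T.degree_phi[of n] by (simp add: phi_ext_t)

lemma poly_phi_derivative_formula:
  assumes "n \<ge> 1" "poly (phi n t) 0 \<noteq> 0"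
  defines "q \<equiv> poly (phi (n+1) t) 0 / lead_coeff (phi (n+1) t) * lead_coeff (phi n t) / poly (phi n t) 0"
  shows "\<exists>D. ((\<lambda>s. poly (phi n s) z) has_vector_derivative D) (at t)
    \<and> 2 * D = (opuc_moment t 1 + q) * poly (phi n t) z
        - lead_coeff (phi (n-1) t) / lead_coeff (phi n t) * (1 + q * z) * poly (phi (n-1) t) z"
proof -
  obtain k where n: "n = Suc k"
    using assms(1) by (cases n) auto
  have "2 * poly (phi' n) z = (opuc_moment t 1 + q) * poly (phi n t) z
      - lead_coeff (phi (n-1) t) / lead_coeff (phi n t) * (1 + q * z) * poly (phi (n-1) t) z"
    using poly_phi'_formula[of k z] assms(2) unfolding n
    by (simp only: verblunsky_ratio_def kappa_t) (simp add: q_def n phi_ext_t poly_0_coeff_0)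
  then show ?thesis
    using poly_phi_has_derivative by blast
qed

lemma lead_coeff_phi_derivative_formula:
  assumes "n \<ge> 1" "poly (phi n t) 0 \<noteq> 0"
  shows "\<exists>D. ((\<lambda>s. lead_coeff (phi n s)) has_vector_derivative D) (at t)
    \<and> 2 / lead_coeff (phi n t) * D = opuc_moment t 1
        + poly (phi (n+1) t) 0 / lead_coeff (phi (n+1) t) * poly (phi n t) 0 / lead_coeff (phi n t)"
proof -
  obtain k where n: "n = Suc k"
    using assms(1) by (cases n) auto
  have "2 / lead_coeff (phi n t) * coeff (phi' n) n = opuc_moment t 1
      + poly (phi (n+1) t) 0 / lead_coeff (phi (n+1) t) * poly (phi n t) 0 / lead_coeff (phi n t)"
    using lead_coeff_phi'_formula[of k] assms(2) unfolding n
    by (simp only: kappa_t) (simp add: phi_ext_t poly_0_coeff_0)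
  then show ?thesis
    using lead_coeff_phi_has_derivative by blast
qed

lemma poly_phi_0_derivative_formula:
  assumes "n \<ge> 1" "poly (phi n t) 0 \<noteq> 0"
  defines "q \<equiv> poly (phi (n+1) t) 0 / lead_coeff (phi (n+1) t) * lead_coeff (phi n t) / poly (phi n t) 0"
  shows "\<exists>D. ((\<lambda>s. poly (phi n s) 0) has_vector_derivative D) (at t)
    \<and> 2 / poly (phi n t) 0 * D = opuc_moment t 1 + q
        - poly (phi (n-1) t) 0 / poly (phi n t) 0 * lead_coeff (phi (n-1) t) / lead_coeff (phi n t)"
proof -
  obtain k where n: "n = Suc k"
    using assms(1) by (cases n) auto
  have "2 / poly (phi n t) 0 * coeff (phi' n) 0 = opuc_moment t 1 + q
      - poly (phi (n-1) t) 0 / poly (phi n t) 0 * lead_coeff (phi (n-1) t) / lead_coeff (phi n t)"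
    using coeff_0_phi'_formula[of k] assms(2) unfolding n
    by (simp only: verblunsky_ratio_def kappa_t) (simp add: q_def n phi_ext_t poly_0_coeff_0)
  then show ?thesis
    using poly_phi_has_derivative[of n 0] by (auto simp: poly_0_coeff_0)
qed

end

theorem lemma2p3:
  fixes phi :: "nat \<Rightarrow> real \<Rightarrow> complex poly" and t :: real
  assumes "t > 0"
    and "\<And>s. s > 0 \<Longrightarrow> is_opuc_family (opuc_weight s) (\<lambda>n. phi n s)"
  shows "(\<forall>z. ((\<lambda>s. poly (phi 0 s) z) has_vector_derivative 0) (at t)) \<and>
    (\<forall>n\<ge>1. poly (phi n t) 0 \<noteq> 0 \<longrightarrow>
      (let \<kappa> = (\<lambda>k. lead_coeff (phi k t)); \<phi>0 = (\<lambda>k. poly (phi k t) 0);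
           r = complex_of_real (bessel_I 1 t / bessel_I 0 t);
           q = \<phi>0 (n+1) / \<kappa> (n+1) * \<kappa> n / \<phi>0 n
       in (\<forall>z. \<exists>D. ((\<lambda>s. poly (phi n s) z) has_vector_derivative D) (at t) \<and>
               2 * D = (r + q) * poly (phi n t) z
                       - \<kappa> (n-1) / \<kappa> n * (1 + q * z) * poly (phi (n-1) t) z) \<and>
          (\<exists>D. ((\<lambda>s. lead_coeff (phi n s)) has_vector_derivative D) (at t) \<and>
               2 / \<kappa> n * D = r + \<phi>0 (n+1) / \<kappa> (n+1) * \<phi>0 n / \<kappa> n) \<and>
          (\<exists>D. ((\<lambda>s. poly (phi n s) 0) has_vector_derivative D) (at t) \<and>
               2 / \<phi>0 n * D = r + q - \<phi>0 (n-1) / \<phi>0 n * \<kappa> (n-1) / \<kappa> n)))"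
proof -
  interpret opuc_deformation phi t
    using assms by unfold_locales
  show ?thesis
    unfolding Let_def opuc_moment_1[symmetric]
    using phi_0_has_derivative poly_phi_derivative_formula lead_coeff_phi_derivative_formula
      poly_phi_0_derivative_formula
    by blast
qed

end
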